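(* Fix $f=\{f_n\}_{n=0}^N$, $q=\{q_n\}_{n=1}^N$, a self-adjoint boundary condition $\mathbf A$, an index $1\le i\le N$, and positive numbers $w_m^{(0)}$ for $m\neq i$. Let $k$ be the number of eigenvalues of the problem $((f,q,w),\mathbf A)$ (which does not depend on $w\in(0,\infty)^N$), and let $0\le j\le k-1$. For $w_i>0$ let $\lambda_j(w_i)$ denote the $j$-th eigenvalue of the problem with weight $w=(w_1^{(0)},\dots,w_{i-1}^{(0)},w_i,w_{i+1}^{(0)},\dots,w_N^{(0)})$. If $\lambda_j(w_i^{(0)})=0$ for some $w_i^{(0)}>0$, then $\lambda_j(w_i)=0$ for all $w_i>w_i^{(0)}$.
   Context: Let $N\ge2$ be an integer. For real sequences $f=\{f_n\}_{n=0}^N$ with $f_n\neq0$, $q=\{q_n\}_{n=1}^N$, and $w=\{w_n\}_{n=1}^N$ with $w_n>0$, consider $-\nabla(f_n\Delta y_n)+q_ny_n=\lambda w_ny_n$, $1\le n\le N$, for $y=\{y_n\}_{n=0}^{N+1}$, $\Delta y_n=y_{n+1}-y_n$, $\nabla y_n=y_n-y_{n-1}$, with a boundary condition $A(y_0,f_0\Delta y_0)^T+B(y_N,f_N\Delta y_N)^T=0$, $A,B$ complex $2\times2$, $\mathrm{rank}(A,B)=2$, self-adjoint meaning $AJA^*=BJB^*$ with $J=\begin{pmatrix}0&1\\-1&0\end{pmatrix}$. Eigenvalues ($\lambda$ with a nontrivial solution) are real; multiplicity = dimension of solution space; counted with multiplicity they are ordered $\lambda_0\le\lambda_1\le\cdots\le\lambda_{k-1}$.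 *)

theory Defs
  imports "HOL-Analysis.Analysis" "HOL-Library.Multiset" "HOL-Library.Function_Algebras"
begin

text \<open>Discrete Sturm-Liouville problem
  -nabla(f_n Delta y_n) + q_n y_n = lambda w_n y_n, 1 <= n <= N,
  with boundary condition A (y_0, f_0 Delta y_0)^T + B (y_N, f_N Delta y_N)^T = 0.
  Sequences are functions on nat; y is indexed by 0..N+1 and is taken to vanish beyond N+1.\<close>

definition fwd_diff :: "(nat \<Rightarrow> complex) \<Rightarrow> nat \<Rightarrow> complex" where
  "fwd_diff y n = y (Suc n) - y n"

definition Jmat :: "complex^2^2" where
  "Jmat = vector [vector [0, 1], vector [-1, 0]]"

definition cadj :: "complex^2^2 \<Rightarrow> complex^2^2" where
  "cadj A = (\<chi> i j. cnj (A $ j $ i))"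

definition rank_AB_2 :: "complex^2^2 \<Rightarrow> complex^2^2 \<Rightarrow> bool" where
  "rank_AB_2 A B \<longleftrightarrow> (\<forall>c::complex^2. c v* A = 0 \<and> c v* B = 0 \<longrightarrow> c = 0)"

definition self_adjoint_bc :: "complex^2^2 \<Rightarrow> complex^2^2 \<Rightarrow> bool" where
  "self_adjoint_bc A B \<longleftrightarrow> A ** Jmat ** cadj A = B ** Jmat ** cadj B"

definition sl_solutions ::
  "nat \<Rightarrow> (nat \<Rightarrow> real) \<Rightarrow> (nat \<Rightarrow> real) \<Rightarrow> (nat \<Rightarrow> real) \<Rightarrow>
   complex^2^2 \<Rightarrow> complex^2^2 \<Rightarrow> complex \<Rightarrow> (nat \<Rightarrow> complex) set" where
  "sl_solutions N f q w A B lam =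
     {y. (\<forall>n>N+1. y n = 0) \<and>
         (\<forall>n\<in>{1..N}.
            - (of_real (f n) * fwd_diff y n - of_real (f (n-1)) * fwd_diff y (n-1))
            + of_real (q n) * y n = lam * of_real (w n) * y n) \<and>
         A *v vector [y 0, of_real (f 0) * fwd_diff y 0]
         + B *v vector [y N, of_real (f N) * fwd_diff y N] = 0}"

definition is_eigenvalue ::
  "nat \<Rightarrow> (nat \<Rightarrow> real) \<Rightarrow> (nat \<Rightarrow> real) \<Rightarrow> (nat \<Rightarrow> real) \<Rightarrow>
   complex^2^2 \<Rightarrow> complex^2^2 \<Rightarrow> complex \<Rightarrow> bool" where
  "is_eigenvalue N f q w A B lam \<longleftrightarrow> (\<exists>y\<in>sl_solutions N f q w A B lam. y \<noteq> (\<lambda>_. 0))"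

definition eig_mult ::
  "nat \<Rightarrow> (nat \<Rightarrow> real) \<Rightarrow> (nat \<Rightarrow> real) \<Rightarrow> (nat \<Rightarrow> real) \<Rightarrow>
   complex^2^2 \<Rightarrow> complex^2^2 \<Rightarrow> complex \<Rightarrow> nat" where
  "eig_mult N f q w A B lam =
     vector_space.dim (\<lambda>(c::complex) (y::nat \<Rightarrow> complex). (\<lambda>n. c * y n))
       (sl_solutions N f q w A B lam)"

definition eig_list ::
  "nat \<Rightarrow> (nat \<Rightarrow> real) \<Rightarrow> (nat \<Rightarrow> real) \<Rightarrow> (nat \<Rightarrow> real) \<Rightarrow>
   complex^2^2 \<Rightarrow> complex^2^2 \<Rightarrow> real list" where
  "eig_list N f q w A B =
     sorted_list_of_multiset
       (\<Sum>lam\<in>{lam::real. is_eigenvalue N f q w A B (of_real lam)}.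
          replicate_mset (eig_mult N f q w A B (of_real lam)) lam)"

end

theory Submission
  imports Defs "HOL-Computational_Algebra.Fundamental_Theorem_Algebra"
begin

text \<open>The eigenvalue problem is a Hermitian pencil \<open>(H, G\<^sub>w)\<close> on the space of restrictions
  to \<open>{1..N}\<close> of the sequences satisfying the boundary condition. By Green's identity and the
  self-adjointness of the boundary condition, \<open>H y z = \<Sum>\<^sub>n (\<tau> y)\<^sub>n conj (z\<^sub>n)\<close> is a Hermitian
  form, and it does not involve the weight; \<open>G\<^sub>w\<close> is the weighted inner product. The spectral
  theorem gives a \<open>G\<^sub>w\<close>-orthonormal eigenbasis whose sorted eigenvalues are the list
  \<open>\<lambda>\<^sub>0 \<le> \<dots> \<le> \<lambda>\<^sub>k\<^sub>-\<^sub>1\<close>. By Sylvester's law of inertia, neither the number of eigenvalues nor the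
  number of negative ones depends on \<open>w\<close>, and the eigenspace of \<open>0\<close> does not depend on \<open>w\<close> at
  all. Whether \<open>\<lambda>\<^sub>j = 0\<close> is therefore independent of the weight; in particular
  \<open>\<lambda>\<^sub>j(w\<^sub>i) = 0\<close> holds for every \<open>w\<^sub>i > 0\<close>, not only for \<open>w\<^sub>i > w\<^sub>i\<^sup>(\<^sup>0\<^sup>)\<close>.\<close>

section \<open>Complex sequences as a vector space\<close>

type_synonym cseq = "nat \<Rightarrow> complex"
type_synonym form = "cseq \<Rightarrow> cseq \<Rightarrow> complex"

abbreviation scal :: "complex \<Rightarrow> cseq \<Rightarrow> cseq" where
  "scal c y \<equiv> (\<lambda>n. c * y n)"

interpretation seq: vector_space scal
  by unfold_locales (auto simp: algebra_simps fun_eq_iff)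

lemma sum_fun_apply: "(\<Sum>i\<in>I. f i) n = (\<Sum>i\<in>I. f i n)"
  by (induction I rule: infinite_finite_induct) auto

lemma sum_set_conv_nth: "distinct xs \<Longrightarrow> (\<Sum>v\<in>set xs. g v) = (\<Sum>i<length xs. g (xs!i))"
  by (simp add: sum.distinct_set_conv_list sum_list_sum_nth atLeast0LessThan)

definition lin_comb :: "cseq \<Rightarrow> cseq list \<Rightarrow> cseq" where
  "lin_comb c xs = (\<Sum>i<length xs. scal (c i) (xs!i))"

definition lin_indep_list :: "cseq list \<Rightarrow> bool" where
  "lin_indep_list xs \<longleftrightarrow> (\<forall>c. lin_comb c xs = 0 \<longrightarrow> (\<forall>i<length xs. c i = 0))"

lemma lin_comb_apply: "lin_comb c xs n = (\<Sum>i<length xs. c i * (xs!i) n)"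
  by (simp add: lin_comb_def sum_fun_apply)

lemma lin_comb_cong: "(\<And>i. i < length xs \<Longrightarrow> c i = d i) \<Longrightarrow> lin_comb c xs = lin_comb d xs"
  unfolding lin_comb_def by (rule sum.cong) auto

lemma lin_comb_add: "lin_comb (\<lambda>i. a i + b i) xs = lin_comb a xs + lin_comb b xs"
  by (simp add: fun_eq_iff lin_comb_apply distrib_right sum.distrib)

lemma lin_comb_scale: "lin_comb (\<lambda>i. c * a i) xs = scal c (lin_comb a xs)"
  by (simp add: fun_eq_iff lin_comb_apply sum_distrib_left mult.assoc)

lemma sum_lessThan_add: "(\<Sum>i<a + b. g i) = (\<Sum>i<a. g i) + (\<Sum>i<b. g (a + i))"
  for g :: "nat \<Rightarrow> 'a::comm_monoid_add"
  by (induction b) (simp_all add: ac_simps)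

lemma lin_comb_append: "lin_comb c (xs @ ys) = lin_comb c xs + lin_comb (\<lambda>i. c (length xs + i)) ys"
  by (simp add: fun_eq_iff lin_comb_apply sum_lessThan_add nth_append)

lemma lin_comb_in_span: "lin_comb c xs \<in> seq.span (set xs)"
  unfolding lin_comb_def by (intro seq.span_sum seq.span_scale seq.span_base) simp

lemma span_set_lin_comb:
  assumes "distinct xs" "x \<in> seq.span (set xs)"
  obtains c where "x = lin_comb c xs"
proof -
  obtain u where "x = (\<Sum>v\<in>set xs. scal (u v) v)"
    using assms(2) seq.span_finite[of "set xs"] by auto
  then have "x = lin_comb (\<lambda>i. u (xs!i)) xs"
    unfolding lin_comb_def sum_set_conv_nth[OF assms(1)] .
  then show ?thesis by (rule that)
qed

lemma lin_indep_list_distinct: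
  assumes "lin_indep_list xs"
  shows "distinct xs"
proof (rule ccontr)
  assume "\<not> distinct xs"
  then obtain i j where ij: "i < length xs" "j < length xs" "i \<noteq> j" "xs!i = xs!j"
    by (auto simp: distinct_conv_nth)
  define c where "c = (\<lambda>k. if k = i then 1 else if k = j then -1 else (0::complex))"
  have "lin_comb c xs n = (\<Sum>k\<in>{i,j}. c k * (xs!k) n)" for n
    unfolding lin_comb_apply by (rule sum.mono_neutral_right) (use ij in \<open>auto simp: c_def\<close>)
  then have "lin_comb c xs = 0"
    using ij by (simp add: c_def fun_eq_iff)
  with assms ij have "c i = 0"
    unfolding lin_indep_list_def by blast
  then show False
    by (simp add: c_def)
qed

lemma lin_indep_list_independent:
  assumes "lin_indep_list xs"
  shows "seq.independent (set xs)"
proof (rule seq.independent_if_scalars_zero)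
  fix u x assume sum0: "(\<Sum>x\<in>set xs. scal (u x) x) = 0" and x: "x \<in> set xs"
  have "lin_comb (\<lambda>i. u (xs!i)) xs = 0"
    using sum0 unfolding lin_comb_def sum_set_conv_nth[OF lin_indep_list_distinct[OF assms]] .
  then have "\<forall>i<length xs. u (xs!i) = 0"
    using assms unfolding lin_indep_list_def by blast
  then show "u x = 0"
    using x by (metis in_set_conv_nth)
qed simp

lemma lin_indep_list_length_le:
  assumes "lin_indep_list xs" "set xs \<subseteq> seq.span F" "finite F"
  shows "length xs \<le> card F"
  using seq.independent_span_bound[OF assms(3) lin_indep_list_independent[OF assms(1)] assms(2)]
    distinct_card[OF lin_indep_list_distinct[OF assms(1)]] by simp


section \<open>Eigenvectors of linear maps on finite-dimensional spaces\<close>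

definition poly_apply :: "(cseq \<Rightarrow> cseq) \<Rightarrow> complex poly \<Rightarrow> cseq \<Rightarrow> cseq" where
  "poly_apply \<Phi> p z = (\<Sum>k\<le>degree p. scal (coeff p k) ((\<Phi>^^k) z))"

lemma poly_apply_degree_le:
  assumes "degree p \<le> n"
  shows "poly_apply \<Phi> p z = (\<Sum>k\<le>n. scal (coeff p k) ((\<Phi>^^k) z))"
  unfolding poly_apply_def
  by (rule sum.mono_neutral_left) (use assms in \<open>auto simp: coeff_eq_0 fun_eq_iff\<close>)

lemma nontrivial_relation_in_span:
  assumes "finite F" "\<And>k. k \<le> card F \<Longrightarrow> P k \<in> seq.span F"
  shows "\<exists>a. (\<exists>k\<le>card F. a k \<noteq> 0) \<and> (\<Sum>k\<le>card F. scal (a k) (P k)) = 0"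
proof (cases "inj_on P {..card F}")
  case True
  have "\<not> seq.independent (P ` {..card F})"
  proof
    assume "seq.independent (P ` {..card F})"
    then have "card (P ` {..card F}) \<le> card F"
      using seq.independent_span_bound[OF assms(1)] assms(2) by blast
    then show False
      by (simp add: card_image[OF True])
  qed
  then obtain u where u: "\<exists>v\<in>P ` {..card F}. u v \<noteq> 0" "(\<Sum>v\<in>P ` {..card F}. scal (u v) v) = 0"
    using seq.dependent_finite[of "P ` {..card F}"] by blast
  then show ?thesis
    by (intro exI[of _ "\<lambda>k. u (P k)"]) (auto simp: sum.reindex[OF True])
next
  case False
  then obtain i j where ij: "i \<le> card F" "j \<le> card F" "i \<noteq> j" "P i = P j"
    by (auto simp: inj_on_def)
  define a where "a = (\<lambda>k. if k = i then 1 else if k = j then -1 else (0::complex))"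
  have "(\<Sum>k\<le>card F. scal (a k) (P k)) = (\<Sum>k\<in>{i,j}. scal (a k) (P k))"
    by (rule sum.mono_neutral_right) (use ij in \<open>auto simp: a_def zero_fun_def\<close>)
  also have "\<dots> = 0"
    using ij by (simp add: a_def fun_eq_iff)
  finally show ?thesis
    using ij(1) by (intro exI[of _ a]) (auto simp: a_def)
qed

locale seq_endomorphism =
  fixes S :: "cseq set" and \<Phi> :: "cseq \<Rightarrow> cseq"
  assumes subspace: "seq.subspace S"
    and maps_into: "\<And>z. z \<in> S \<Longrightarrow> \<Phi> z \<in> S"
    and additive: "\<And>z y. z \<in> S \<Longrightarrow> y \<in> S \<Longrightarrow> \<Phi> (z + y) = \<Phi> z + \<Phi> y"
    and homogeneous: "\<And>z c. z \<in> S \<Longrightarrow> \<Phi> (scal c z) = scal c (\<Phi> z)"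
begin

lemma funpow_in: "z \<in> S \<Longrightarrow> (\<Phi>^^k) z \<in> S"
  by (induction k) (auto intro: maps_into)

lemma map_sum:
  assumes "finite I" "\<And>i. i \<in> I \<Longrightarrow> w i \<in> S"
  shows "\<Phi> (\<Sum>i\<in>I. scal (a i) (w i)) = (\<Sum>i\<in>I. scal (a i) (\<Phi> (w i)))"
  using assms
proof (induction I rule: finite_induct)
  case empty
  then show ?case
    using homogeneous[of 0 0] seq.subspace_0[OF subspace] by (simp add: zero_fun_def)
next
  case (insert x F)
  have IH: "\<Phi> (\<Sum>i\<in>F. scal (a i) (w i)) = (\<Sum>i\<in>F. scal (a i) (\<Phi> (w i)))"
    using insert by simp
  have wx: "w x \<in> S"
    using insert by simp
  have rest: "(\<Sum>i\<in>F. scal (a i) (w i)) \<in> S"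
    using insert by (intro seq.subspace_sum[OF subspace] seq.subspace_scale[OF subspace]) auto
  show ?case
    by (simp only: sum.insert[OF insert(1,2)] additive[OF seq.subspace_scale[OF subspace wx] rest]
        homogeneous[OF wx] IH)
qed

lemma poly_apply_in: "z \<in> S \<Longrightarrow> poly_apply \<Phi> p z \<in> S"
  unfolding poly_apply_def
  by (intro seq.subspace_sum[OF subspace] seq.subspace_scale[OF subspace] funpow_in)

lemma poly_apply_linear_factor:
  assumes z: "z \<in> S"
  shows "poly_apply \<Phi> ([:-c,1:] * r) z = \<Phi> (poly_apply \<Phi> r z) - scal c (poly_apply \<Phi> r z)"
proof -
  define d where "d = degree r"
  have coeff_factor: "coeff ([:-c,1:] * r) k = (case k of 0 \<Rightarrow> 0 | Suc j \<Rightarrow> coeff r j) - c * coeff r k" for k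
    by (simp add: mult_pCons_left coeff_pCons split: nat.splits)
  have lhs: "poly_apply \<Phi> ([:-c,1:] * r) z = (\<Sum>k\<le>Suc d. scal (coeff ([:-c,1:] * r) k) ((\<Phi>^^k) z))"
    by (rule poly_apply_degree_le) (use degree_mult_le[of "[:-c,1:]" r] in \<open>auto simp: d_def\<close>)
  have shifted: "\<Phi> (poly_apply \<Phi> r z) = (\<Sum>k\<le>d. scal (coeff r k) ((\<Phi>^^(Suc k)) z))"
    unfolding poly_apply_def d_def by (subst map_sum) (auto intro: funpow_in z)
  have unshifted: "poly_apply \<Phi> r z = (\<Sum>k\<le>Suc d. scal (coeff r k) ((\<Phi>^^k) z))"
    by (rule poly_apply_degree_le) (simp add: d_def)
  show ?thesis
  proof
    fix n
    have "poly_apply \<Phi> ([:-c,1:] * r) z n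
        = (\<Sum>k\<le>Suc d. (case k of 0 \<Rightarrow> 0 | Suc j \<Rightarrow> coeff r j) * (\<Phi>^^k) z n)
          - c * (\<Sum>k\<le>Suc d. coeff r k * (\<Phi>^^k) z n)"
      unfolding lhs coeff_factor sum_fun_apply
      by (simp add: algebra_simps sum_subtractf sum_distrib_left)
    also have "(\<Sum>k\<le>Suc d. (case k of 0 \<Rightarrow> 0 | Suc j \<Rightarrow> coeff r j) * (\<Phi>^^k) z n)
               = (\<Sum>k\<le>d. coeff r k * (\<Phi>^^(Suc k)) z n)"
      by (subst sum.atMost_Suc_shift) simp
    finally show "poly_apply \<Phi> ([:-c,1:] * r) z n = (\<Phi> (poly_apply \<Phi> r z) - scal c (poly_apply \<Phi> r z)) n"
      using shifted unshifted by (simp add: sum_fun_apply)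
  qed
qed

lemma eigenvector_if_annihilated:
  assumes v: "v \<in> S" "v \<noteq> 0"
  shows "r \<noteq> 0 \<Longrightarrow> poly_apply \<Phi> r v = 0 \<Longrightarrow> \<exists>x\<in>S. x \<noteq> 0 \<and> (\<exists>\<mu>. \<Phi> x = scal \<mu> x)"
proof (induction "degree r" arbitrary: r rule: less_induct)
  case less
  show ?case
  proof (cases "degree r = 0")
    case True
    then have "poly_apply \<Phi> r v = scal (coeff r 0) v" and "coeff r 0 \<noteq> 0"
      using less.prems leading_coeff_neq_0[of r] by (simp_all add: poly_apply_def)
    with less.prems v show ?thesis
      by (auto simp: fun_eq_iff)
  next
    case False
    then have "\<not> constant (poly r)"
      by (simp add: constant_degree)
    then obtain z0 where "poly r z0 = 0"
      using fundamental_theorem_of_algebra by blast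
    then obtain r' where r': "r = [:-z0,1:] * r'"
      by (auto simp: poly_eq_0_iff_dvd dvd_def)
    with less.prems have "r' \<noteq> 0"
      by auto
    then have "degree r' < degree r"
      unfolding r' by (subst degree_mult_eq) auto
    show ?thesis
    proof (cases "poly_apply \<Phi> r' v = 0")
      case True
      then show ?thesis
        using less.hyps \<open>r' \<noteq> 0\<close> \<open>degree r' < degree r\<close> by blast
    next
      case False
      have "\<Phi> (poly_apply \<Phi> r' v) = scal z0 (poly_apply \<Phi> r' v)"
        using less.prems poly_apply_linear_factor[OF v(1), of z0 r'] r' by (simp add: fun_eq_iff)
      then show ?thesis
        using False poly_apply_in[OF v(1)] by blast
    qed
  qed
qed

lemma eigenvector_exists:
  assumes F: "finite F" "S \<subseteq> seq.span F" and v: "v \<in> S" "v \<noteq> 0"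
  shows "\<exists>x\<in>S. x \<noteq> 0 \<and> (\<exists>\<mu>. \<Phi> x = scal \<mu> x)"
proof -
  obtain a where a: "\<exists>k\<le>card F. a k \<noteq> 0" "(\<Sum>k\<le>card F. scal (a k) ((\<Phi>^^k) v)) = 0"
    using nontrivial_relation_in_span[OF F(1), of "\<lambda>k. (\<Phi>^^k) v"] F(2) funpow_in[OF v(1)] by blast
  define p where "p = (\<Sum>k\<le>card F. monom (a k) k)"
  have coeff_p: "coeff p k = (if k \<le> card F then a k else 0)" for k
    unfolding p_def by (simp add: coeff_sum coeff_monom)
  then have "p \<noteq> 0"
    using a(1) by (metis coeff_0)
  moreover have "poly_apply \<Phi> p v = 0"
    using a(2) coeff_p by (subst poly_apply_degree_le[of p "card F"]) (auto intro: degree_le)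
  ultimately show ?thesis
    using eigenvector_if_annihilated[OF v] by blast
qed

end


section \<open>Hermitian pencils and their spectral theorem\<close>

locale hermitian_form =
  fixes S :: "cseq set" and B :: "form"
  assumes subspace: "seq.subspace S"
    and add_left: "\<And>x y z. x \<in> S \<Longrightarrow> y \<in> S \<Longrightarrow> z \<in> S \<Longrightarrow> B (x + y) z = B x z + B y z"
    and scale_left: "\<And>x z c. x \<in> S \<Longrightarrow> z \<in> S \<Longrightarrow> B (scal c x) z = c * B x z"
    and hermitian: "\<And>x z. x \<in> S \<Longrightarrow> z \<in> S \<Longrightarrow> B z x = cnj (B x z)"
begin

lemma zero_left: "z \<in> S \<Longrightarrow> B 0 z = 0"
  using scale_left[OF seq.subspace_0[OF subspace], of z 0] by (simp add: zero_fun_def)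

lemma add_right: "x \<in> S \<Longrightarrow> y \<in> S \<Longrightarrow> z \<in> S \<Longrightarrow> B z (x + y) = B z x + B z y"
  using hermitian[of "x + y" z] hermitian[of x z] hermitian[of y z] add_left[of x y z]
    seq.subspace_add[OF subspace, of x y] by simp

lemma scale_right: "x \<in> S \<Longrightarrow> z \<in> S \<Longrightarrow> B z (scal c x) = cnj c * B z x"
  using hermitian[of "scal c x" z] hermitian[of x z] scale_left[of x z c]
    seq.subspace_scale[OF subspace, of x c] by simp

lemma diff_left:
  assumes "x \<in> S" "y \<in> S" "z \<in> S"
  shows "B (x - y) z = B x z - B y z"
proof -
  have "x - y = x + scal (-1) y"
    by (simp add: fun_eq_iff)
  then have "B (x - y) z = B x z + B (scal (-1) y) z"
    using add_left[OF assms(1) seq.subspace_scale[OF subspace assms(2)] assms(3)] by (simp only:)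
  then show ?thesis
    using scale_left[OF assms(2,3), of "-1"] by simp
qed

lemma diag_real: "x \<in> S \<Longrightarrow> B x x = of_real (Re (B x x))"
  using hermitian[of x x] by (simp add: complex_eq_iff)

lemma sum_left:
  assumes "finite I" "\<And>i. i \<in> I \<Longrightarrow> f i \<in> S" "z \<in> S"
  shows "B (\<Sum>i\<in>I. scal (c i) (f i)) z = (\<Sum>i\<in>I. c i * B (f i) z)"
  using assms(1,2)
proof (induction I rule: finite_induct)
  case empty
  then show ?case
    using zero_left[OF assms(3)] by (simp add: zero_fun_def)
next
  case (insert x F)
  have rest: "(\<Sum>i\<in>F. scal (c i) (f i)) \<in> S"
    using insert by (intro seq.subspace_sum[OF subspace] seq.subspace_scale[OF subspace]) auto
  have fx: "f x \<in> S"
    using insert by simp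
  have "B (\<Sum>i\<in>insert x F. scal (c i) (f i)) z = B (scal (c x) (f x)) z + B (\<Sum>i\<in>F. scal (c i) (f i)) z"
    by (simp only: sum.insert[OF insert(1,2)] add_left[OF seq.subspace_scale[OF subspace fx] rest assms(3)])
  also have "\<dots> = c x * B (f x) z + (\<Sum>i\<in>F. c i * B (f i) z)"
    using insert fx assms(3) by (simp add: scale_left)
  finally show ?case
    by (simp only: sum.insert[OF insert(1,2)])
qed

lemma lin_comb_left:
  "set xs \<subseteq> S \<Longrightarrow> z \<in> S \<Longrightarrow> B (lin_comb c xs) z = (\<Sum>i<length xs. c i * B (xs!i) z)"
  unfolding lin_comb_def by (rule sum_left) auto

lemma lin_comb_right:
  assumes "set xs \<subseteq> S" "z \<in> S"
  shows "B z (lin_comb c xs) = (\<Sum>i<length xs. cnj (c i) * B z (xs!i))"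
proof -
  have "lin_comb c xs \<in> S"
    using assms(1) unfolding lin_comb_def
    by (intro seq.subspace_sum[OF subspace] seq.subspace_scale[OF subspace]) auto
  then show ?thesis
    using assms by (simp add: hermitian[of _ z] lin_comb_left cnj_sum nth_mem subset_iff)
qed

end

definition orthonormal :: "form \<Rightarrow> cseq list \<Rightarrow> bool" where
  "orthonormal G xs \<longleftrightarrow> distinct xs \<and> (\<forall>x\<in>set xs. \<forall>y\<in>set xs. G x y = (if x = y then 1 else 0))"

definition pencil_eigvec :: "form \<Rightarrow> form \<Rightarrow> cseq set \<Rightarrow> cseq \<Rightarrow> real \<Rightarrow> bool" where
  "pencil_eigvec H G S x l \<longleftrightarrow> (\<forall>z\<in>S. H x z = of_real l * G x z)"

definition orth_compl :: "form \<Rightarrow> cseq set \<Rightarrow> cseq \<Rightarrow> cseq set" where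
  "orth_compl G S x = {y\<in>S. G y x = 0}"

lemma orthonormal_nth:
  "orthonormal G xs \<Longrightarrow> i < length xs \<Longrightarrow> j < length xs \<Longrightarrow> G (xs!i) (xs!j) = (if i = j then 1 else 0)"
  unfolding orthonormal_def by (simp add: nth_eq_iff_index_eq)

lemma orthonormal_filter: "orthonormal G xs \<Longrightarrow> orthonormal G (filter P xs)"
  unfolding orthonormal_def by auto

locale hermitian_pencil = H: hermitian_form S0 H + G: hermitian_form S0 G for S0 H G +
  assumes finite_dim: "\<exists>F. finite F \<and> S0 \<subseteq> seq.span F"
    and G_pos: "\<And>x. x \<in> S0 \<Longrightarrow> x \<noteq> 0 \<Longrightarrow> 0 < Re (G x x)"
begin

lemma orthonormal_lin_indep:
  assumes "orthonormal G xs" "set xs \<subseteq> S0"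
  shows "lin_indep_list xs"
  unfolding lin_indep_list_def
proof (intro allI impI)
  fix c i assume c: "lin_comb c xs = 0" and i: "i < length xs"
  have xi: "xs!i \<in> S0"
    using assms(2) i by auto
  have "G (lin_comb c xs) (xs!i) = (\<Sum>k<length xs. if k = i then c k else 0)"
    unfolding G.lin_comb_left[OF assms(2) xi] by (rule sum.cong) (use orthonormal_nth[OF assms(1)] i in auto)
  then show "c i = 0"
    using c G.zero_left[OF xi] i by simp
qed

lemma orthonormal_expansion:
  assumes "orthonormal G xs" "set xs \<subseteq> S0" "z \<in> seq.span (set xs)"
  shows "z = lin_comb (\<lambda>i. G z (xs!i)) xs"
proof -
  obtain c where z: "z = lin_comb c xs"
    using span_set_lin_comb assms(1,3) unfolding orthonormal_def by blast
  have "G z (xs!j) = c j" if j: "j < length xs" for j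
  proof -
    have "G z (xs!j) = (\<Sum>k<length xs. if k = j then c k else 0)"
      unfolding z G.lin_comb_left[OF assms(2) nth_mem[OF j, THEN subsetD[OF assms(2)]]]
      by (rule sum.cong) (use orthonormal_nth[OF assms(1)] j in auto)
    then show ?thesis
      using j by simp
  qed
  then show ?thesis
    unfolding z by (intro lin_comb_cong) simp
qed

definition normalized :: "cseq \<Rightarrow> cseq" where
  "normalized x = scal (of_real (1 / sqrt (Re (G x x)))) x"

lemma normalized_in: "x \<in> S \<Longrightarrow> seq.subspace S \<Longrightarrow> normalized x \<in> S"
  unfolding normalized_def using seq.subspace_scale by blast

lemma G_normalized:
  assumes "x \<in> S0" "x \<noteq> 0"
  shows "G (normalized x) (normalized x) = 1"
proof -
  define g where "g = Re (G x x)"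
  have g: "g > 0" "G x x = of_real g"
    using G_pos[OF assms] G.diag_real[OF assms(1)] by (simp_all add: g_def)
  define a where "a = (of_real (1 / sqrt g) :: complex)"
  have "G (normalized x) (normalized x) = a * (cnj a * G x x)"
    unfolding normalized_def g_def[symmetric] a_def[symmetric]
    by (simp only: G.scale_left[OF assms(1) seq.subspace_scale[OF G.subspace assms(1)]] G.scale_right[OF assms(1,1)])
  also have "\<dots> = of_real ((1 / sqrt g) * (1 / sqrt g) * g)"
    unfolding a_def g(2) by (simp only: complex_cnj_complex_of_real of_real_mult mult.assoc)
  also have "(1 / sqrt g) * (1 / sqrt g) * g = 1"
    using g by (simp add: field_simps)
  finally show ?thesis
    by simp
qed

lemma normalized_eigvec:
  assumes "x \<in> S0" "S \<subseteq> S0" "pencil_eigvec H G S x l"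
  shows "pencil_eigvec H G S (normalized x) l"
  unfolding pencil_eigvec_def
proof
  fix z assume z: "z \<in> S"
  then have "z \<in> S0"
    using assms(2) by auto
  then show "H (normalized x) z = of_real l * G (normalized x) z"
    using assms(3) z unfolding normalized_def pencil_eigvec_def
    by (simp only: H.scale_left[OF assms(1)] G.scale_left[OF assms(1)] mult.left_commute)
qed

lemma orth_compl_normalized:
  assumes "x \<in> S0" "x \<noteq> 0" "S \<subseteq> S0"
  shows "orth_compl G S (normalized x) = orth_compl G S x"
proof -
  have "G y (normalized x) = cnj (of_real (1 / sqrt (Re (G x x)))) * G y x" if "y \<in> S" for y
    unfolding normalized_def using that assms(3) by (intro G.scale_right[OF assms(1)]) auto
  then show ?thesis
    using G_pos[OF assms(1,2)] unfolding orth_compl_def by auto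
qed

lemma orth_compl_subspace:
  assumes "seq.subspace S" "S \<subseteq> S0" "x \<in> S0"
  shows "seq.subspace (orth_compl G S x)"
  using assms unfolding orth_compl_def seq.subspace_def
  by (auto simp: G.zero_left G.add_left G.scale_left subset_iff)

lemma independent_card_le_dim:
  assumes "seq.independent B" "B \<subseteq> T" "T \<subseteq> S0"
  shows "finite B" "card B \<le> seq.dim T"
proof -
  obtain F where F: "finite F" "S0 \<subseteq> seq.span F"
    using finite_dim by blast
  obtain C where C: "C \<subseteq> T" "seq.independent C" "T \<subseteq> seq.span C" "card C = seq.dim T"
    by (rule seq.basis_exists)
  have "finite C"
    using seq.independent_span_bound[OF F(1) C(2)] C(1) assms(3) F(2) by blast
  moreover have "B \<subseteq> seq.span C"
    using assms(2) C(3) by blast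
  ultimately show "finite B" "card B \<le> seq.dim T"
    using seq.independent_span_bound[OF _ assms(1), of C] C(4) by auto
qed

lemma dim_orth_compl_less:
  assumes S: "seq.subspace S" "S \<subseteq> S0" and x: "x \<in> S" "x \<noteq> 0"
  shows "seq.dim (orth_compl G S x) < seq.dim S"
proof -
  have xS0: "x \<in> S0"
    using x S by auto
  obtain C where C: "C \<subseteq> orth_compl G S x" "seq.independent C" "card C = seq.dim (orth_compl G S x)"
    by (rule seq.basis_exists)
  have "x \<notin> seq.span C"
  proof
    assume "x \<in> seq.span C"
    then have "x \<in> orth_compl G S x"
      using seq.span_minimal[OF C(1) orth_compl_subspace[OF S xS0]] by blast
    then show False
      using G_pos[OF xS0 x(2)] by (simp add: orth_compl_def)
  qed
  then have "seq.independent (insert x C)" and "x \<notin> C"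
    using seq.independent_insertI C(2) seq.span_base by blast+
  moreover have "insert x C \<subseteq> S"
    using C(1) x(1) by (auto simp: orth_compl_def)
  ultimately show ?thesis
    using independent_card_le_dim[of "insert x C" S] S(2) C(3) by simp
qed

lemma orthonormal_extend:
  assumes S: "seq.subspace S" "S \<subseteq> S0" and u: "u \<in> S" "G u u = 1"
    and es: "orthonormal G es" "set es \<subseteq> orth_compl G S u" "orth_compl G S u \<subseteq> seq.span (set es)"
  shows "orthonormal G (u # es)" "set (u # es) \<subseteq> S" "S \<subseteq> seq.span (set (u # es))"
proof -
  have uS0: "u \<in> S0"
    using u S by auto
  have esS: "set es \<subseteq> S" and G_eu: "\<And>e. e \<in> set es \<Longrightarrow> G e u = 0"
    using es(2) by (auto simp: orth_compl_def)
  then have G_ue: "G u e = 0" if "e \<in> set es" for e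
    using G.hermitian[of e u] S(2) uS0 that by auto
  have "u \<notin> set es"
    using G_eu u(2) by force
  then show "orthonormal G (u # es)"
    using es(1) u(2) G_eu G_ue unfolding orthonormal_def by auto
  show "set (u # es) \<subseteq> S"
    using esS u by auto
  show "S \<subseteq> seq.span (set (u # es))"
  proof
    fix y assume y: "y \<in> S"
    define y' where "y' = y - scal (G y u) u"
    have "y' \<in> S"
      unfolding y'_def by (intro seq.subspace_diff[OF S(1)] seq.subspace_scale[OF S(1)] y u)
    moreover have "G y' u = 0"
      unfolding y'_def using y S(2) uS0 u(2)
      by (auto simp: G.diff_left G.scale_left seq.subspace_scale[OF G.subspace])
    ultimately have "y' \<in> seq.span (set (u # es))"
      using es(3) seq.span_mono[of "set es" "set (u # es)"] by (auto simp: orth_compl_def)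
    moreover have "scal (G y u) u \<in> seq.span (set (u # es))"
      by (intro seq.span_scale seq.span_base) simp
    ultimately have "y' + scal (G y u) u \<in> seq.span (set (u # es))"
      by (rule seq.span_add)
    then show "y \<in> seq.span (set (u # es))"
      by (simp add: y'_def)
  qed
qed

lemma pencil_eigvec_orth_compl:
  assumes S: "seq.subspace S" "S \<subseteq> S0"
    and e: "e \<in> S" "G e e = 1" "pencil_eigvec H G S e l"
    and y: "y \<in> orth_compl G S e" "pencil_eigvec H G (orth_compl G S e) y l'"
  shows "pencil_eigvec H G S y l'"
  unfolding pencil_eigvec_def
proof
  fix z assume z: "z \<in> S"
  have eS0: "e \<in> S0" and zS0: "z \<in> S0" and yS0: "y \<in> S0" and G_ye: "G y e = 0"
    using e z S y(1) by (auto simp: orth_compl_def)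
  define a where "a = G z e"
  define z' where "z' = z - scal a e"
  have z'S0: "z' \<in> S0"
    using zS0 eS0 unfolding z'_def by (intro seq.subspace_diff[OF G.subspace] seq.subspace_scale[OF G.subspace])
  have "z' \<in> S"
    unfolding z'_def by (intro seq.subspace_diff[OF S(1)] seq.subspace_scale[OF S(1)] z e)
  moreover have "G z' e = 0"
    unfolding z'_def a_def using e(2) zS0 eS0 by (simp add: G.diff_left G.scale_left seq.subspace_scale[OF G.subspace])
  ultimately have z'_compl: "z' \<in> orth_compl G S e"
    by (simp add: orth_compl_def)
  have z_split: "z = z' + scal a e"
    unfolding z'_def by (simp add: fun_eq_iff)
  have "H e y = of_real l * G e y"
    using e(3) y(1) unfolding pencil_eigvec_def orth_compl_def by auto
  then have H_ye: "H y e = 0"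
    using H.hermitian[OF eS0 yS0] G.hermitian[OF eS0 yS0] G_ye by simp
  have "H y z = H y z'"
    unfolding z_split using H_ye
    by (simp add: H.add_right[OF z'S0 seq.subspace_scale[OF G.subspace eS0] yS0] H.scale_right[OF eS0 yS0])
  also have "\<dots> = of_real l' * G y z'"
    using y(2) z'_compl unfolding pencil_eigvec_def by auto
  also have "G y z' = G y z"
    unfolding z_split using G_ye
    by (simp add: G.add_right[OF z'S0 seq.subspace_scale[OF G.subspace eS0] yS0] G.scale_right[OF eS0 yS0])
  finally show "H y z = of_real l' * G y z" .
qed

lemma orthonormal_basis_exists:
  "seq.subspace S \<Longrightarrow> S \<subseteq> S0 \<Longrightarrow> \<exists>es. orthonormal G es \<and> set es \<subseteq> S \<and> S \<subseteq> seq.span (set es)"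
proof (induction "seq.dim S" arbitrary: S rule: less_induct)
  case less
  show ?case
  proof (cases "S \<subseteq> {0}")
    case True
    then show ?thesis
      by (intro exI[of _ "[]"]) (simp add: orthonormal_def)
  next
    case False
    then obtain v where v: "v \<in> S" "v \<noteq> 0"
      by auto
    have vS0: "v \<in> S0"
      using v less.prems by auto
    have "orth_compl G S v \<subseteq> S0"
      using less.prems(2) by (auto simp: orth_compl_def)
    then obtain es where es: "orthonormal G es" "set es \<subseteq> orth_compl G S v" "orth_compl G S v \<subseteq> seq.span (set es)"
      using less.hyps[OF dim_orth_compl_less[OF less.prems v] orth_compl_subspace[OF less.prems vS0]] by blast
    show ?thesis
      using orthonormal_extend[OF less.prems normalized_in[OF v(1) less.prems(1)] G_normalized[OF vS0 v(2)]]
        es[folded orth_compl_normalized[OF vS0 v(2) less.prems(2)]] by blast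
  qed
qed

text \<open>The eigenvector is obtained from an eigenvector of the operator \<open>\<Phi>\<close> representing \<open>H\<close>
  with respect to \<open>G\<close>, i.e.\ \<open>G (\<Phi> x) y = H x y\<close>; its eigenvalue is real because it equals
  \<open>H x x / G x x\<close>.\<close>
lemma pencil_eigvec_exists:
  assumes S: "seq.subspace S" "S \<subseteq> S0" and v: "v \<in> S" "v \<noteq> 0"
  shows "\<exists>x\<in>S. x \<noteq> 0 \<and> (\<exists>l. pencil_eigvec H G S x l)"
proof -
  obtain B where B: "orthonormal G B" "set B \<subseteq> S" "S \<subseteq> seq.span (set B)"
    using orthonormal_basis_exists[OF S] by blast
  have BS0: "set B \<subseteq> S0"
    using B(2) S(2) by auto
  then have Bi: "\<And>i. i < length B \<Longrightarrow> B!i \<in> S0"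
    by auto
  define \<Phi> where "\<Phi> z = lin_comb (\<lambda>i. H z (B!i)) B" for z
  interpret seq_endomorphism S \<Phi>
  proof
    show "\<Phi> z \<in> S" for z
      unfolding \<Phi>_def using lin_comb_in_span seq.span_minimal[OF B(2) S(1)] by blast
    show "\<Phi> (z + y) = \<Phi> z + \<Phi> y" if "z \<in> S" "y \<in> S" for z y
    proof -
      have "z \<in> S0" "y \<in> S0"
        using that S(2) by auto
      then show ?thesis
        unfolding \<Phi>_def lin_comb_add[symmetric] by (intro lin_comb_cong) (simp add: H.add_left Bi)
    qed
    show "\<Phi> (scal c z) = scal c (\<Phi> z)" if "z \<in> S" for z c
    proof -
      have "z \<in> S0"
        using that S(2) by auto
      then show ?thesis
        unfolding \<Phi>_def lin_comb_scale[symmetric] by (intro lin_comb_cong) (simp add: H.scale_left Bi)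
    qed
  qed (rule S(1))
  obtain F where "finite F" "S0 \<subseteq> seq.span F"
    using finite_dim by blast
  then obtain x \<mu> where x: "x \<in> S" "x \<noteq> 0" "\<Phi> x = scal \<mu> x"
    using eigenvector_exists[of F v] S(2) v by blast
  have xS0: "x \<in> S0"
    using x S by auto
  have H_eq: "H x y = \<mu> * G x y" if y: "y \<in> S" for y
  proof -
    have yS0: "y \<in> S0"
      using y S by auto
    have "H x y = H x (lin_comb (\<lambda>i. G y (B!i)) B)"
      using orthonormal_expansion[OF B(1) BS0] y B(3) by auto
    also have "\<dots> = (\<Sum>i<length B. H x (B!i) * G (B!i) y)"
      unfolding H.lin_comb_right[OF BS0 xS0]
      by (rule sum.cong[OF refl]) (simp add: G.hermitian[OF yS0 Bi] mult.commute)
    also have "\<dots> = G (\<Phi> x) y"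
      unfolding \<Phi>_def by (rule G.lin_comb_left[OF BS0 yS0, symmetric])
    also have "\<dots> = \<mu> * G x y"
      unfolding x(3) by (rule G.scale_left[OF xS0 yS0])
    finally show ?thesis .
  qed
  have "\<mu> * of_real (Re (G x x)) = of_real (Re (H x x))"
    using H_eq[OF x(1)] H.diag_real[OF xS0] G.diag_real[OF xS0] by simp
  then have "\<mu> = of_real (Re (H x x) / Re (G x x))"
    using G_pos[OF xS0 x(2)] by (simp add: field_simps)
  then have "pencil_eigvec H G S x (Re (H x x) / Re (G x x))"
    unfolding pencil_eigvec_def using H_eq by simp
  then show ?thesis
    using x by blast
qed

lemma spectral_decomposition:
  "seq.subspace S \<Longrightarrow> S \<subseteq> S0 \<Longrightarrow>
   \<exists>es lam. orthonormal G es \<and> set es \<subseteq> S \<and> S \<subseteq> seq.span (set es) \<and>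
     (\<forall>e\<in>set es. pencil_eigvec H G S e (lam e))"
proof (induction "seq.dim S" arbitrary: S rule: less_induct)
  case less
  show ?case
  proof (cases "S \<subseteq> {0}")
    case True
    then show ?thesis
      by (intro exI[of _ "[]"]) (simp add: orthonormal_def)
  next
    case False
    then obtain v where "v \<in> S" "v \<noteq> 0"
      by auto
    then obtain x l where x: "x \<in> S" "x \<noteq> 0" "pencil_eigvec H G S x l"
      using pencil_eigvec_exists[OF less.prems] by blast
    have xS0: "x \<in> S0"
      using x less.prems by auto
    define e where "e = normalized x"
    have e: "e \<in> S" "G e e = 1" "pencil_eigvec H G S e l"
      unfolding e_def using normalized_in[OF x(1) less.prems(1)] G_normalized[OF xS0 x(2)]
        normalized_eigvec[OF xS0 less.prems(2) x(3)] by auto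
    have compl_e: "orth_compl G S e = orth_compl G S x"
      unfolding e_def by (rule orth_compl_normalized[OF xS0 x(2) less.prems(2)])
    have "orth_compl G S x \<subseteq> S0"
      using less.prems(2) by (auto simp: orth_compl_def)
    then obtain es lam where es: "orthonormal G es" "set es \<subseteq> orth_compl G S e"
      "orth_compl G S e \<subseteq> seq.span (set es)" "\<forall>e'\<in>set es. pencil_eigvec H G (orth_compl G S e) e' (lam e')"
      using less.hyps[OF dim_orth_compl_less[OF less.prems x(1,2)] orth_compl_subspace[OF less.prems xS0]]
      unfolding compl_e by blast
    note basis = orthonormal_extend[OF less.prems e(1,2) es(1-3)]
    have "pencil_eigvec H G S e' ((lam(e := l)) e')" if e': "e' \<in> set (e # es)" for e'
    proof (cases "e' = e")
      case True
      then show ?thesis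
        using e(3) by simp
    next
      case False
      then have "e' \<in> set es"
        using e' by simp
      with False show ?thesis
        using pencil_eigvec_orth_compl[OF less.prems e subsetD[OF es(2)] bspec[OF es(4)]] by simp
    qed
    then show ?thesis
      using basis by blast
  qed
qed

theorem spectral_theorem:
  "\<exists>es lam. orthonormal G es \<and> set es \<subseteq> S0 \<and> S0 \<subseteq> seq.span (set es) \<and>
     (\<forall>e\<in>set es. pencil_eigvec H G S0 e (lam e))"
  using spectral_decomposition[OF G.subspace order_refl] .

end


section \<open>Sylvester's law of inertia for pencils\<close>

context hermitian_pencil
begin

lemma quadratic_form_eigbasis:
  assumes es: "orthonormal G es" "set es \<subseteq> S0" "\<forall>e\<in>set es. pencil_eigvec H G S0 e (lam e)"
  shows "Re (H (lin_comb c es) (lin_comb c es)) = (\<Sum>i<length es. lam (es!i) * (cmod (c i))^2)"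
proof -
  have y: "lin_comb c es \<in> S0"
    using es(2) unfolding lin_comb_def
    by (intro seq.subspace_sum[OF G.subspace] seq.subspace_scale[OF G.subspace]) auto
  have "H (es!i) (lin_comb c es) = of_real (lam (es!i)) * cnj (c i)" if i: "i < length es" for i
  proof -
    have "H (es!i) (lin_comb c es) = of_real (lam (es!i)) * G (es!i) (lin_comb c es)"
      using es(3) i y unfolding pencil_eigvec_def by auto
    also have "G (es!i) (lin_comb c es) = (\<Sum>j<length es. if j = i then cnj (c j) else 0)"
      unfolding G.lin_comb_right[OF es(2) nth_mem[OF i, THEN subsetD[OF es(2)]]]
      by (rule sum.cong[OF refl]) (use orthonormal_nth[OF es(1)] i in auto)
    finally show ?thesis
      using i by simp
  qed
  then have "H (lin_comb c es) (lin_comb c es) = (\<Sum>i<length es. of_real (lam (es!i) * (cmod (c i))^2))"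
    unfolding H.lin_comb_left[OF es(2) y]
    by (intro sum.cong) (simp_all add: mult.left_commute complex_mult_cnj cmod_power2)
  then show ?thesis
    by (simp add: Re_sum)
qed

lemma negative_on_eigspan:
  assumes es: "orthonormal G es" "set es \<subseteq> S0" "\<forall>e\<in>set es. pencil_eigvec H G S0 e (lam e)"
    and neg: "\<forall>e\<in>set es. lam e < 0"
    and y: "y \<in> seq.span (set es)" "y \<noteq> 0"
  shows "Re (H y y) < 0"
proof -
  obtain c where yc: "y = lin_comb c es"
    using span_set_lin_comb es(1) y(1) unfolding orthonormal_def by blast
  obtain i where i: "i < length es" "c i \<noteq> 0"
  proof (rule ccontr)
    assume "\<not> thesis"
    then have "lin_comb c es = lin_comb (\<lambda>_. 0) es"
      using that by (intro lin_comb_cong) blast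
    with y(2) show False
      by (simp add: yc lin_comb_def fun_eq_iff)
  qed
  have "0 < (\<Sum>k<length es. - (lam (es!k) * (cmod (c k))^2))"
  proof (rule sum_pos2)
    show "0 < - (lam (es!i) * (cmod (c i))^2)"
      using neg i by (simp add: mult_neg_pos)
    show "0 \<le> - (lam (es!k) * (cmod (c k))^2)" if "k \<in> {..<length es}" for k
      using neg that by (simp add: mult_nonpos_nonneg less_imp_le)
  qed (use i in simp_all)
  then show ?thesis
    unfolding yc quadratic_form_eigbasis[OF es] by (simp add: sum_negf)
qed

lemma nonnegative_on_eigspan:
  assumes es: "orthonormal G es" "set es \<subseteq> S0" "\<forall>e\<in>set es. pencil_eigvec H G S0 e (lam e)"
    and nonneg: "\<forall>e\<in>set es. lam e \<ge> 0"
    and y: "y \<in> seq.span (set es)"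
  shows "Re (H y y) \<ge> 0"
proof -
  obtain c where yc: "y = lin_comb c es"
    using span_set_lin_comb es(1) y unfolding orthonormal_def by blast
  show ?thesis
    unfolding yc quadratic_form_eigbasis[OF es] using nonneg by (auto intro!: sum_nonneg)
qed

lemma pencil_eigvecs_orth:
  assumes x: "x \<in> S0" "pencil_eigvec H G S0 x l" and e: "e \<in> S0" "pencil_eigvec H G S0 e m"
    and "l \<noteq> m"
  shows "G x e = 0"
proof -
  have "H x e = of_real l * G x e" and "H e x = of_real m * G e x"
    using x e unfolding pencil_eigvec_def by auto
  then have "(of_real l - of_real m) * G x e = 0"
    using H.hermitian[OF e(1) x(1)] G.hermitian[OF e(1) x(1)] by (auto simp: left_diff_distrib)
  then show ?thesis
    using \<open>l \<noteq> m\<close> by simp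
qed

lemma pencil_eigvec_in_eigspan:
  assumes es: "orthonormal G es" "set es \<subseteq> S0" "S0 \<subseteq> seq.span (set es)"
      "\<forall>e\<in>set es. pencil_eigvec H G S0 e (lam e)"
    and x: "x \<in> S0" "pencil_eigvec H G S0 x l"
  shows "x \<in> seq.span (set (filter (\<lambda>e. lam e = l) es))"
proof -
  have "x = lin_comb (\<lambda>i. G x (es!i)) es"
    using orthonormal_expansion[OF es(1,2)] es(3) x(1) by auto
  also have "\<dots> \<in> seq.span (set (filter (\<lambda>e. lam e = l) es))"
    unfolding lin_comb_def
  proof (intro seq.span_sum)
    fix i assume "i \<in> {..<length es}"
    then have ei: "es!i \<in> set es"
      by simp
    show "scal (G x (es!i)) (es!i) \<in> seq.span (set (filter (\<lambda>e. lam e = l) es))"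
    proof (cases "lam (es!i) = l")
      case True
      then show ?thesis
        using ei by (intro seq.span_scale seq.span_base) simp
    next
      case False
      then have "G x (es!i) = 0"
        using pencil_eigvecs_orth[OF x] es(2,4) ei by auto
      then show ?thesis
        using seq.span_zero by (simp add: zero_fun_def)
    qed
  qed
  finally show ?thesis .
qed

end

lemma lin_indep_list_append:
  assumes xs: "lin_indep_list xs" "\<forall>y\<in>seq.span (set xs). y \<noteq> 0 \<longrightarrow> Re (H y y) < 0"
    and ys: "lin_indep_list ys" "\<forall>y\<in>seq.span (set ys). Re (H y y) \<ge> 0"
  shows "lin_indep_list (xs @ ys)"
  unfolding lin_indep_list_def
proof (intro allI impI)
  fix c k assume c: "lin_comb c (xs @ ys) = 0" and k: "k < length (xs @ ys)"
  define x where "x = lin_comb c xs"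
  define y where "y = lin_comb (\<lambda>i. c (length xs + i)) ys"
  have "x = scal (-1) y"
    using c lin_comb_append[of c xs ys] unfolding x_def y_def
    by (simp add: fun_eq_iff eq_neg_iff_add_eq_0)
  then have "x \<in> seq.span (set ys)"
    using lin_comb_in_span seq.span_scale unfolding y_def by metis
  then have x0: "x = 0"
    using xs(2) ys(2) lin_comb_in_span[of c xs] unfolding x_def by force
  then have y0: "y = 0"
    using c lin_comb_append[of c xs ys] unfolding x_def y_def by simp
  show "c k = 0"
  proof (cases "k < length xs")
    case True
    then show ?thesis
      using xs(1) x0 unfolding lin_indep_list_def x_def by blast
  next
    case False
    then obtain j where "k = length xs + j" "j < length ys"
      using k by (metis add_diff_inverse_nat add_less_cancel_left length_append)
    then show ?thesis
      using ys(1) y0 unfolding lin_indep_list_def y_def by blast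
  qed
qed

text \<open>The eigenvectors of negative eigenvalue for \<open>G\<^sub>1\<close> and those of nonnegative eigenvalue for
  \<open>G\<^sub>2\<close> together form an independent list, since \<open>H\<close> is negative definite on the span of the
  former and positive semidefinite on the span of the latter.\<close>
lemma inertia_bound:
  assumes p1: "hermitian_pencil S0 H G1" and p2: "hermitian_pencil S0 H G2"
    and es1: "orthonormal G1 es1" "set es1 \<subseteq> S0" "S0 \<subseteq> seq.span (set es1)"
      "\<forall>e\<in>set es1. pencil_eigvec H G1 S0 e (lam1 e)"
    and es2: "orthonormal G2 es2" "set es2 \<subseteq> S0" "\<forall>e\<in>set es2. pencil_eigvec H G2 S0 e (lam2 e)"
  shows "length (filter (\<lambda>e. lam1 e < 0) es1) + length (filter (\<lambda>e. \<not> lam2 e < 0) es2) \<le> length es1"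
proof -
  interpret P1: hermitian_pencil S0 H G1 by (rule p1)
  interpret P2: hermitian_pencil S0 H G2 by (rule p2)
  define neg where "neg = filter (\<lambda>e. lam1 e < 0) es1"
  define nonneg where "nonneg = filter (\<lambda>e. \<not> lam2 e < 0) es2"
  have neg: "orthonormal G1 neg" "set neg \<subseteq> S0" "\<forall>e\<in>set neg. pencil_eigvec H G1 S0 e (lam1 e)"
    using es1 orthonormal_filter unfolding neg_def by auto
  have nonneg: "orthonormal G2 nonneg" "set nonneg \<subseteq> S0" "\<forall>e\<in>set nonneg. pencil_eigvec H G2 S0 e (lam2 e)"
    using es2 orthonormal_filter unfolding nonneg_def by auto
  have "lin_indep_list (neg @ nonneg)"
  proof (rule lin_indep_list_append)
    show "lin_indep_list neg" "lin_indep_list nonneg"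
      using P1.orthonormal_lin_indep[OF neg(1,2)] P2.orthonormal_lin_indep[OF nonneg(1,2)] .
    show "\<forall>y\<in>seq.span (set neg). y \<noteq> 0 \<longrightarrow> Re (H y y) < 0"
      using P1.negative_on_eigspan[OF neg] unfolding neg_def by auto
    show "\<forall>y\<in>seq.span (set nonneg). Re (H y y) \<ge> 0"
      using P2.nonnegative_on_eigspan[OF nonneg] unfolding nonneg_def by auto
  qed
  moreover have "set (neg @ nonneg) \<subseteq> seq.span (set es1)"
    using neg(2) nonneg(2) es1(3) by auto
  ultimately have "length (neg @ nonneg) \<le> card (set es1)"
    by (rule lin_indep_list_length_le) simp
  then show ?thesis
    using card_length[of es1] unfolding neg_def nonneg_def by simp
qed

theorem sylvester_inertia:
  assumes p1: "hermitian_pencil S0 H G1" and p2: "hermitian_pencil S0 H G2"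
    and es1: "orthonormal G1 es1" "set es1 \<subseteq> S0" "S0 \<subseteq> seq.span (set es1)"
      "\<forall>e\<in>set es1. pencil_eigvec H G1 S0 e (lam1 e)"
    and es2: "orthonormal G2 es2" "set es2 \<subseteq> S0" "S0 \<subseteq> seq.span (set es2)"
      "\<forall>e\<in>set es2. pencil_eigvec H G2 S0 e (lam2 e)"
  shows "length es1 = length es2"
    and "length (filter (\<lambda>e. lam1 e < 0) es1) = length (filter (\<lambda>e. lam2 e < 0) es2)"
proof -
  have "length es1 \<le> length es2" "length es2 \<le> length es1"
    using lin_indep_list_length_le[OF hermitian_pencil.orthonormal_lin_indep[OF p1 es1(1,2)], of "set es2"]
      lin_indep_list_length_le[OF hermitian_pencil.orthonormal_lin_indep[OF p2 es2(1,2)], of "set es1"]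
      card_length[of es1] card_length[of es2] es1(2,3) es2(2,3) by force+
  moreover have "length (filter (\<lambda>e. lam1 e < 0) es1) + length (filter (\<lambda>e. \<not> lam2 e < 0) es2) \<le> length es1"
    by (rule inertia_bound[OF p1 p2 es1 es2(1,2,4)])
  moreover have "length (filter (\<lambda>e. lam2 e < 0) es2) + length (filter (\<lambda>e. \<not> lam1 e < 0) es1) \<le> length es2"
    by (rule inertia_bound[OF p2 p1 es2 es1(1,2,4)])
  ultimately show "length es1 = length es2"
    and "length (filter (\<lambda>e. lam1 e < 0) es1) = length (filter (\<lambda>e. lam2 e < 0) es2)"
    using sum_length_filter_compl[of "\<lambda>e. lam1 e < 0" es1] sum_length_filter_compl[of "\<lambda>e. lam2 e < 0" es2]
    by linarith+
qed

section \<open>Self-adjoint boundary conditions\<close>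

definition bc_row :: "complex^2^2 \<Rightarrow> complex^2^2 \<Rightarrow> complex \<Rightarrow> complex \<Rightarrow> complex \<Rightarrow> complex \<Rightarrow> 2 \<Rightarrow> complex" where
  "bc_row A B a1 a2 b1 b2 i = A$i$1 * a1 + A$i$2 * a2 + B$i$1 * b1 + B$i$2 * b2"

definition symp :: "complex \<Rightarrow> complex \<Rightarrow> complex \<Rightarrow> complex \<Rightarrow> complex" where
  "symp a1 a2 p1 p2 = a1 * cnj p2 - a2 * cnj p1"

text \<open>Vectors of \<open>\<complex>\<^sup>4\<close> are encoded as sequences supported in \<open>{0, 1, 2, 3}\<close>, so that the linear algebra
  of sequences applies to them.\<close>
definition quad_seq :: "complex \<Rightarrow> complex \<Rightarrow> complex \<Rightarrow> complex \<Rightarrow> cseq" where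
  "quad_seq a1 a2 b1 b2 n = (if n = 0 then a1 else if n = 1 then a2 else if n = 2 then b1 else if n = 3 then b2 else 0)"

definition inner4 :: "form" where
  "inner4 u w = u 0 * cnj (w 0) + u 1 * cnj (w 1) + u 2 * cnj (w 2) + u 3 * cnj (w 3)"

lemma quad_seq_simps [simp]:
  "quad_seq a1 a2 b1 b2 0 = a1" "quad_seq a1 a2 b1 b2 (Suc 0) = a2" "quad_seq a1 a2 b1 b2 2 = b1"
  "quad_seq a1 a2 b1 b2 3 = b2" "n > 3 \<Longrightarrow> quad_seq a1 a2 b1 b2 n = 0"
  by (auto simp: quad_seq_def)

lemma quad_seq_in_span: "quad_seq a1 a2 b1 b2 \<in> seq.span ((\<lambda>k n. if n = k then 1 else 0) ` {0, 1, 2, 3})"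
proof -
  have "quad_seq a1 a2 b1 b2 = (\<Sum>k\<in>{0, 1, 2, 3}. scal (quad_seq a1 a2 b1 b2 k) (\<lambda>n. if n = k then 1 else 0))"
    by (auto simp: fun_eq_iff sum_fun_apply quad_seq_def)
  also have "\<dots> \<in> seq.span ((\<lambda>k n. if n = k then 1 else 0) ` {0, 1, 2, 3})"
    by (intro seq.span_sum seq.span_scale seq.span_base) auto
  finally show ?thesis .
qed

lemma inner4_self_eq_0:
  assumes "inner4 x x = 0"
  shows "x 0 = 0" "x 1 = 0" "x 2 = 0" "x 3 = 0"
proof -
  have "(cmod (x 0))\<^sup>2 + (cmod (x 1))\<^sup>2 + (cmod (x 2))\<^sup>2 + (cmod (x 3))\<^sup>2 = 0"
    using arg_cong[OF assms, of Re] unfolding inner4_def by (simp add: complex_mult_cnj cmod_power2)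
  moreover have "(cmod (x k))\<^sup>2 \<ge> 0" for k
    by simp
  ultimately show "x 0 = 0" "x 1 = 0" "x 2 = 0" "x 3 = 0"
    by (smt (verit) norm_eq_zero power_eq_0_iff)+
qed

lemma bc_vector_eq_0_iff:
  "A *v vector [a1, a2] + B *v vector [b1, b2] = (0::complex^2) \<longleftrightarrow>
     bc_row A B a1 a2 b1 b2 1 = 0 \<and> bc_row A B a1 a2 b1 b2 2 = 0"
  by (simp add: vec_eq_iff forall_2 matrix_vector_mult_def sum_2 bc_row_def add.assoc)

lemma rank_AB_2_rows:
  assumes "rank_AB_2 A B"
    and "c1 * A$1$1 + c2 * A$2$1 = 0" "c1 * A$1$2 + c2 * A$2$2 = 0"
    and "c1 * B$1$1 + c2 * B$2$1 = 0" "c1 * B$1$2 + c2 * B$2$2 = 0"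
  shows "c1 = 0 \<and> c2 = 0"
proof -
  have "vector [c1, c2] v* A = (0::complex^2)" "vector [c1, c2] v* B = (0::complex^2)"
    using assms(2-5) by (simp_all add: vec_eq_iff forall_2 vector_matrix_mult_def sum_2)
  then have "vector [c1, c2] = (0::complex^2)"
    using assms(1) unfolding rank_AB_2_def by blast
  then show ?thesis
    by (metis vector_2 zero_index)
qed

lemma self_adjoint_bc_entries:
  assumes "self_adjoint_bc A B"
  shows "A$i$1 * cnj (A$k$2) - A$i$2 * cnj (A$k$1) = B$i$1 * cnj (B$k$2) - B$i$2 * cnj (B$k$1)"
proof -
  have "(A ** Jmat ** cadj A)$i$k = (B ** Jmat ** cadj B)$i$k"
    using assms unfolding self_adjoint_bc_def by simp
  then show ?thesis
    by (simp add: matrix_matrix_mult_def sum_2 Jmat_def cadj_def algebra_simps)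
qed

text \<open>The kernel of the boundary map \<open>(a, b) \<mapsto> A a + B b\<close> is the Lagrangian subspace
  \<open>{(J A\<^sup>* d, -J B\<^sup>* d) | d}\<close>: self-adjointness puts these vectors into the kernel and the rank
  condition makes them a two-dimensional family, which then exhausts the kernel by a dimension
  count in \<open>\<complex>\<^sup>4\<close>.\<close>
locale boundary_condition =
  fixes A B :: "complex^2^2"
  assumes rank: "rank_AB_2 A B" and self_adjoint: "self_adjoint_bc A B"
begin

definition bc_row4 :: "cseq \<Rightarrow> 2 \<Rightarrow> complex" where
  "bc_row4 v k = bc_row A B (v 0) (v 1) (v 2) (v 3) k"

definition adjA :: "complex \<Rightarrow> complex \<Rightarrow> 2 \<Rightarrow> complex" where
  "adjA d1 d2 j = cnj (A$1$j) * d1 + cnj (A$2$j) * d2"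

definition adjB :: "complex \<Rightarrow> complex \<Rightarrow> 2 \<Rightarrow> complex" where
  "adjB d1 d2 j = cnj (B$1$j) * d1 + cnj (B$2$j) * d2"

definition kernel_vec :: "complex \<Rightarrow> complex \<Rightarrow> cseq" where
  "kernel_vec d1 d2 = quad_seq (adjA d1 d2 2) (- adjA d1 d2 1) (- adjB d1 d2 2) (adjB d1 d2 1)"

definition row_conj :: "2 \<Rightarrow> cseq" where
  "row_conj k = quad_seq (cnj (A$k$1)) (cnj (A$k$2)) (cnj (B$k$1)) (cnj (B$k$2))"

lemma bc_row_kernel_vec: "bc_row A B (adjA d1 d2 2) (- adjA d1 d2 1) (- adjB d1 d2 2) (adjB d1 d2 1) k = 0"
proof -
  have "bc_row A B (adjA d1 d2 2) (- adjA d1 d2 1) (- adjB d1 d2 2) (adjB d1 d2 1) k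
      = d1 * ((A$k$1 * cnj (A$1$2) - A$k$2 * cnj (A$1$1)) - (B$k$1 * cnj (B$1$2) - B$k$2 * cnj (B$1$1)))
        + d2 * ((A$k$1 * cnj (A$2$2) - A$k$2 * cnj (A$2$1)) - (B$k$1 * cnj (B$2$2) - B$k$2 * cnj (B$2$1)))"
    unfolding bc_row_def adjA_def adjB_def by (simp add: algebra_simps)
  then show ?thesis
    using self_adjoint_bc_entries[OF self_adjoint, of k 1] self_adjoint_bc_entries[OF self_adjoint, of k 2]
    by simp
qed

lemma bc_row4_kernel_vec: "bc_row4 (kernel_vec d1 d2) k = 0"
  using bc_row_kernel_vec unfolding bc_row4_def kernel_vec_def by simp

lemma inner4_row_conj: "inner4 u (row_conj k) = bc_row4 u k"
  unfolding inner4_def row_conj_def bc_row4_def bc_row_def by (simp add: algebra_simps)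

lemma kernel_vec_linear: "kernel_vec d1 d2 n = d1 * kernel_vec 1 0 n + d2 * kernel_vec 0 1 n"
  unfolding kernel_vec_def adjA_def adjB_def quad_seq_def by (simp add: algebra_simps)

lemma kernel_vec_eq_0:
  assumes "\<And>n. n \<le> 3 \<Longrightarrow> kernel_vec d1 d2 n = 0"
  shows "d1 = 0 \<and> d2 = 0"
proof -
  have "adjA d1 d2 1 = 0" "adjA d1 d2 2 = 0" "adjB d1 d2 1 = 0" "adjB d1 d2 2 = 0"
    using assms[of 0] assms[of 1] assms[of 2] assms[of 3] by (simp_all add: kernel_vec_def)
  then have "cnj d1 = 0 \<and> cnj d2 = 0"
    by (intro rank_AB_2_rows[OF rank]) (simp_all add: adjA_def adjB_def complex_eq_iff algebra_simps)
  then show ?thesis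
    by simp
qed

lemma symp_kernel_vec:
  "symp v0 v1 (adjA d1 d2 2) (- adjA d1 d2 1) - symp v2 v3 (- adjB d1 d2 2) (adjB d1 d2 1)
    = - (cnj d1 * bc_row A B v0 v1 v2 v3 1 + cnj d2 * bc_row A B v0 v1 v2 v3 2)"
  unfolding symp_def adjA_def adjB_def bc_row_def by (simp add: algebra_simps)

lemma bc_row4_linear: "bc_row4 (\<lambda>n. a * u n + b * w n) k = a * bc_row4 u k + b * bc_row4 w k"
  unfolding bc_row4_def bc_row_def by (simp add: algebra_simps)

lemma inner4_linear_right: "inner4 u (\<lambda>n. a * w n + b * z n) = cnj a * inner4 u w + cnj b * inner4 u z"
  unfolding inner4_def by (simp add: algebra_simps)

lemma bc_kernel_parametrization:
  assumes "bc_row A B a1 a2 b1 b2 1 = 0" "bc_row A B a1 a2 b1 b2 2 = 0"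
  obtains d1 d2 where "a1 = adjA d1 d2 2" "a2 = - adjA d1 d2 1" "b1 = - adjB d1 d2 2" "b2 = adjB d1 d2 1"
proof -
  define v where "v = quad_seq a1 a2 b1 b2"
  have v_kernel: "bc_row4 v k = 0" for k
    using exhaust_2[of k] assms unfolding bc_row4_def v_def by auto
  have "\<exists>d1 d2. \<forall>n\<le>3. v n = kernel_vec d1 d2 n"
  proof (rule ccontr)
    assume not_param: "\<not> ?thesis"
    define L where "L = [kernel_vec 1 0, kernel_vec 0 1, v, row_conj 1, row_conj 2]"
    have "lin_indep_list L"
      unfolding lin_indep_list_def
    proof (intro allI impI)
      fix c i assume c: "lin_comb c L = 0" and i: "i < length L"
      define X where "X n = 1 * kernel_vec (c 0) (c 1) n + c 2 * v n" for n
      define Y where "Y n = c 3 * row_conj 1 n + c 4 * row_conj 2 n" for n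
      have "X n + Y n = 0" for n
        using fun_cong[OF c, of n] kernel_vec_linear[of "c 0" "c 1" n]
        unfolding L_def X_def Y_def lin_comb_apply by (simp add: eval_nat_numeral add.assoc)
      then have XY: "X n = - Y n" for n
        by (simp add: eq_neg_iff_add_eq_0)
      \<comment> \<open>\<open>X\<close> lies in the kernel and \<open>Y\<close> in the row space, which is orthogonal to it.\<close>
      have "inner4 X Y = cnj (c 3) * bc_row4 X 1 + cnj (c 4) * bc_row4 X 2"
        unfolding Y_def inner4_linear_right inner4_row_conj ..
      also have "\<dots> = 0"
        unfolding X_def bc_row4_linear bc_row4_kernel_vec v_kernel by simp
      finally have "inner4 X X = 0"
        using XY by (simp add: inner4_def algebra_simps)
      note X0 = inner4_self_eq_0[OF this]
      then have Y0: "Y 0 = 0" "Y 1 = 0" "Y 2 = 0" "Y 3 = 0"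
        using XY by (metis neg_equal_0_iff_equal)+
      have "cnj (c 3) = 0 \<and> cnj (c 4) = 0"
        by (rule rank_AB_2_rows[OF rank])
          (use arg_cong[OF Y0(1), of cnj] arg_cong[OF Y0(2), of cnj] arg_cong[OF Y0(3), of cnj]
            arg_cong[OF Y0(4), of cnj] in \<open>simp_all add: Y_def row_conj_def\<close>)
      then have c34: "c 3 = 0" "c 4 = 0"
        by simp_all
      have c2: "c 2 = 0"
      proof (rule ccontr)
        assume c2: "c 2 \<noteq> 0"
        define d1 where "d1 = - c 0 / c 2"
        define d2 where "d2 = - c 1 / c 2"
        have "kernel_vec (c 0) (c 1) n = - c 2 * kernel_vec d1 d2 n" for n
          unfolding d1_def d2_def using c2
          by (simp add: kernel_vec_def adjA_def adjB_def quad_seq_def field_simps)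
        then have "c 2 * (v n - kernel_vec d1 d2 n) = 0" if "X n = 0" for n
          using that unfolding X_def by (simp add: algebra_simps)
        then have "\<forall>n\<le>3. v n = kernel_vec d1 d2 n"
          using X0 c2 by (auto simp: le_Suc_eq eval_nat_numeral)
        with not_param show False
          by blast
      qed
      have "kernel_vec (c 0) (c 1) n = 0" if "n \<le> 3" for n
        using X0 that c2 unfolding X_def by (auto simp: le_Suc_eq eval_nat_numeral)
      then have "c 0 = 0" "c 1 = 0"
        using kernel_vec_eq_0 by blast+
      moreover have "i \<in> {0, 1, 2, 3, 4}"
        using i by (auto simp: L_def)
      ultimately show "c i = 0"
        using c2 c34 by auto
    qed
    moreover have "set L \<subseteq> seq.span ((\<lambda>k n. if n = k then 1 else 0) ` {0, 1, 2, 3})"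
      unfolding L_def kernel_vec_def row_conj_def v_def using quad_seq_in_span by auto
    ultimately have "length L \<le> card ((\<lambda>k n. if n = k then (1::complex) else 0) ` {0, 1, 2, 3::nat})"
      by (rule lin_indep_list_length_le) simp
    also have "\<dots> \<le> 4"
      by (rule order_trans[OF card_image_le]) simp_all
    finally show False
      by (simp add: L_def)
  qed
  then obtain d1 d2 where "\<forall>n\<le>3. v n = kernel_vec d1 d2 n"
    by blast
  then have "v 0 = kernel_vec d1 d2 0" "v 1 = kernel_vec d1 d2 1" "v 2 = kernel_vec d1 d2 2" "v 3 = kernel_vec d1 d2 3"
    by simp_all
  then show ?thesis
    by (intro that[of d1 d2]) (simp_all add: v_def kernel_vec_def)
qed

lemma bc_isotropic:
  assumes "bc_row A B a1 a2 b1 b2 1 = 0" "bc_row A B a1 a2 b1 b2 2 = 0"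
    and "bc_row A B p1 p2 r1 r2 1 = 0" "bc_row A B p1 p2 r1 r2 2 = 0"
  shows "symp a1 a2 p1 p2 = symp b1 b2 r1 r2"
proof -
  obtain d1 d2 where "p1 = adjA d1 d2 2" "p2 = - adjA d1 d2 1" "r1 = - adjB d1 d2 2" "r2 = adjB d1 d2 1"
    using bc_kernel_parametrization[OF assms(3,4)] by blast
  then show ?thesis
    using symp_kernel_vec[of a1 a2 d1 d2 b1 b2] assms(1,2) by simp
qed

end

section \<open>The Sturm--Liouville problem as a Hermitian pencil\<close>

locale sl_problem = boundary_condition A B for A B +
  fixes N :: nat and f q :: "nat \<Rightarrow> real"
  assumes N_ge_2: "N \<ge> 2" and f_nonzero: "\<forall>n\<in>{0..N}. f n \<noteq> 0"
begin

lemma f_0_nonzero: "f 0 \<noteq> 0" and f_N_nonzero: "f N \<noteq> 0"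
  using f_nonzero by auto

definition bc_vals :: "cseq \<Rightarrow> 2 \<Rightarrow> complex" where
  "bc_vals y k = bc_row A B (y 0) (of_real (f 0) * fwd_diff y 0) (y N) (of_real (f N) * fwd_diff y N) k"

definition bc_domain :: "cseq set" where
  "bc_domain = {y. (\<forall>n>N+1. y n = 0) \<and> bc_vals y 1 = 0 \<and> bc_vals y 2 = 0}"

definition sl_op :: "cseq \<Rightarrow> cseq" where
  "sl_op y n = - (of_real (f n) * fwd_diff y n - of_real (f (n-1)) * fwd_diff y (n-1)) + of_real (q n) * y n"

lemma sl_solutions_eq:
  "sl_solutions N f q w A B lam = {y\<in>bc_domain. \<forall>n\<in>{1..N}. sl_op y n = lam * of_real (w n) * y n}"
  unfolding sl_solutions_def bc_domain_def sl_op_def bc_vals_def bc_vector_eq_0_iff by auto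

definition boundary_term :: "cseq \<Rightarrow> cseq \<Rightarrow> cseq" where
  "boundary_term y z n = y n * cnj (of_real (f n) * fwd_diff z n) - of_real (f n) * fwd_diff y n * cnj (z n)"

lemma boundary_term_symp:
  "boundary_term y z n = symp (y n) (of_real (f n) * fwd_diff y n) (z n) (of_real (f n) * fwd_diff z n)"
  unfolding boundary_term_def symp_def by simp

lemma green_identity:
  "(\<Sum>n\<in>{1..M}. sl_op y n * cnj (z n) - y n * cnj (sl_op z n)) = boundary_term y z M - boundary_term y z 0"
proof (induction M)
  case (Suc M)
  have "sl_op y (Suc M) * cnj (z (Suc M)) - y (Suc M) * cnj (sl_op z (Suc M))
      = boundary_term y z (Suc M) - boundary_term y z M"
    unfolding sl_op_def boundary_term_def fwd_diff_def by (simp add: algebra_simps)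
  with Suc show ?case
    by (simp add: atLeastAtMostSuc_conv)
qed simp

definition op_form :: "form" where
  "op_form y z = (\<Sum>n\<in>{1..N}. sl_op y n * cnj (z n))"

lemma op_form_hermitian:
  assumes "y \<in> bc_domain" "z \<in> bc_domain"
  shows "op_form y z = cnj (op_form z y)"
proof -
  have "boundary_term y z 0 = boundary_term y z N"
    unfolding boundary_term_symp by (rule bc_isotropic) (use assms in \<open>auto simp: bc_domain_def bc_vals_def\<close>)
  then have "(\<Sum>n\<in>{1..N}. sl_op y n * cnj (z n) - y n * cnj (sl_op z n)) = 0"
    using green_identity[where M = N and y = y and z = z] by simp
  then have "op_form y z - (\<Sum>n\<in>{1..N}. y n * cnj (sl_op z n)) = 0"
    unfolding op_form_def by (simp add: sum_subtractf)
  moreover have "(\<Sum>n\<in>{1..N}. y n * cnj (sl_op z n)) = cnj (op_form z y)"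
    unfolding op_form_def by (simp add: cnj_sum mult.commute)
  ultimately show ?thesis
    by simp
qed

lemma bc_vals_add: "bc_vals (y + z) k = bc_vals y k + bc_vals z k"
  unfolding bc_vals_def bc_row_def fwd_diff_def by (simp add: algebra_simps)

lemma bc_vals_scale: "bc_vals (scal c y) k = c * bc_vals y k"
  unfolding bc_vals_def bc_row_def fwd_diff_def by (simp add: algebra_simps)

lemma sl_op_add: "sl_op (y + z) n = sl_op y n + sl_op z n"
  unfolding sl_op_def fwd_diff_def by (simp add: algebra_simps)

lemma sl_op_scale: "sl_op (scal c y) n = c * sl_op y n"
  unfolding sl_op_def fwd_diff_def by (simp add: algebra_simps)

lemma op_form_add: "op_form (y + z) w = op_form y w + op_form z w"
  unfolding op_form_def sl_op_add by (simp add: distrib_right sum.distrib)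

lemma op_form_scale: "op_form (scal c y) w = c * op_form y w"
  unfolding op_form_def sl_op_scale by (simp add: sum_distrib_left mult.assoc)

lemma op_form_diff: "op_form (y - z) w = op_form y w - op_form z w"
proof -
  have "sl_op (y - z) n = sl_op y n - sl_op z n" for n
    unfolding sl_op_def fwd_diff_def by (simp add: algebra_simps)
  then show ?thesis
    unfolding op_form_def by (simp add: left_diff_distrib sum_subtractf)
qed

lemma bc_domain_subspace: "seq.subspace bc_domain"
proof (rule seq.subspaceI)
  show "0 \<in> bc_domain"
    unfolding bc_domain_def bc_vals_def bc_row_def fwd_diff_def by simp
  show "y + z \<in> bc_domain" if "y \<in> bc_domain" "z \<in> bc_domain" for y z
    using that unfolding bc_domain_def using bc_vals_add by auto
  show "scal c y \<in> bc_domain" if "y \<in> bc_domain" for c y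
    using that unfolding bc_domain_def using bc_vals_scale by auto
qed

text \<open>Elements of the domain with the same restriction to \<open>{1..N}\<close> differ only at \<open>0\<close> and \<open>N + 1\<close>,
  which \<open>op_form\<close> does not see (\<open>H_form_trunc\<close>); so the pencil lives on the restrictions.\<close>
definition trunc :: "cseq \<Rightarrow> cseq" where
  "trunc y = (\<lambda>n. if n \<in> {1..N} then y n else 0)"

definition restricted_domain :: "cseq set" where
  "restricted_domain = trunc ` bc_domain"

lemma op_form_trunc: "op_form y (trunc z) = op_form y z"
  unfolding op_form_def trunc_def by (rule sum.cong) auto

lemma trunc_add: "trunc (y + z) = trunc y + trunc z"
  and trunc_scale: "trunc (scal c y) = scal c (trunc y)"
  and trunc_diff: "trunc (y - z) = trunc y - trunc z"
  and trunc_zero: "trunc 0 = 0"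
  unfolding trunc_def by (simp_all add: fun_eq_iff)

lemma trunc_sum: "trunc (\<Sum>b\<in>S. scal (u b) (g b)) = (\<Sum>b\<in>S. scal (u b) (trunc (g b)))"
  unfolding trunc_def by (auto simp: fun_eq_iff sum_fun_apply)

lemma trunc_eq_0_iff: "trunc y = 0 \<longleftrightarrow> (\<forall>n\<in>{1..N}. y n = 0)"
  unfolding trunc_def by (auto simp: fun_eq_iff)

lemma restricted_domain_subspace: "seq.subspace restricted_domain"
proof (rule seq.subspaceI)
  show "0 \<in> restricted_domain"
    unfolding restricted_domain_def using seq.subspace_0[OF bc_domain_subspace] trunc_zero by force
  show "x + x' \<in> restricted_domain" if xx: "x \<in> restricted_domain" "x' \<in> restricted_domain" for x x'
  proof -
    obtain y y' where "y \<in> bc_domain" "y' \<in> bc_domain" "x = trunc y" "x' = trunc y'"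
      using xx unfolding restricted_domain_def by blast
    then show ?thesis
      unfolding restricted_domain_def using trunc_add seq.subspace_add[OF bc_domain_subspace]
      by (metis image_eqI)
  qed
  show "scal c x \<in> restricted_domain" if x: "x \<in> restricted_domain" for c x
  proof -
    obtain y where "y \<in> bc_domain" "x = trunc y"
      using x unfolding restricted_domain_def by auto
    then show ?thesis
      unfolding restricted_domain_def using trunc_scale seq.subspace_scale[OF bc_domain_subspace]
      by (metis image_eqI)
  qed
qed

definition extension :: "cseq \<Rightarrow> cseq" where
  "extension x = (SOME y. y \<in> bc_domain \<and> trunc y = x)"

lemma extension_spec:
  assumes "x \<in> restricted_domain"
  shows "extension x \<in> bc_domain" "trunc (extension x) = x"
proof -
  have "\<exists>y. y \<in> bc_domain \<and> trunc y = x"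
    using assms unfolding restricted_domain_def by auto
  then have "extension x \<in> bc_domain \<and> trunc (extension x) = x"
    unfolding extension_def by (rule someI_ex)
  then show "extension x \<in> bc_domain" "trunc (extension x) = x"
    by auto
qed

definition H_form :: "form" where
  "H_form x z = op_form (extension x) z"

lemma H_form_trunc:
  assumes y: "y \<in> bc_domain" and z: "z \<in> restricted_domain"
  shows "H_form (trunc y) z = op_form y z"
proof -
  have "trunc y \<in> restricted_domain"
    unfolding restricted_domain_def using y by auto
  then have u: "extension (trunc y) - y \<in> bc_domain" "trunc (extension (trunc y) - y) = 0"
    using seq.subspace_diff[OF bc_domain_subspace] extension_spec y by (auto simp: trunc_diff)
  obtain z' where z': "z' \<in> bc_domain" "z = trunc z'"
    using z unfolding restricted_domain_def by auto
  have "op_form z' (extension (trunc y) - y) = 0"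
    using u(2) unfolding op_form_def trunc_eq_0_iff by simp
  then have "op_form (extension (trunc y) - y) z = 0"
    using op_form_hermitian[OF u(1) z'(1)] unfolding z'(2) op_form_trunc by simp
  then show ?thesis
    unfolding H_form_def op_form_diff by simp
qed

lemma hermitian_form_H: "hermitian_form restricted_domain H_form"
proof
  fix x y z assume xyz: "x \<in> restricted_domain" "y \<in> restricted_domain" "z \<in> restricted_domain"
  have "x + y = trunc (extension x + extension y)"
    using extension_spec xyz by (simp add: trunc_add)
  then show "H_form (x + y) z = H_form x z + H_form y z"
    using H_form_trunc[OF seq.subspace_add[OF bc_domain_subspace extension_spec(1)[OF xyz(1)]
        extension_spec(1)[OF xyz(2)]] xyz(3)]
    by (simp add: H_form_def op_form_add)
next
  fix x z c assume xz: "x \<in> restricted_domain" "z \<in> restricted_domain"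
  have "scal c x = trunc (scal c (extension x))"
    using extension_spec(2)[OF xz(1)] by (simp add: trunc_scale)
  then show "H_form (scal c x) z = c * H_form x z"
    using H_form_trunc[OF seq.subspace_scale[OF bc_domain_subspace extension_spec(1)[OF xz(1)]] xz(2)]
    by (simp add: H_form_def op_form_scale)
  show "H_form z x = cnj (H_form x z)"
    using op_form_hermitian[OF extension_spec(1)[OF xz(2)] extension_spec(1)[OF xz(1)]]
      op_form_trunc[of "extension z" "extension x"] op_form_trunc[of "extension x" "extension z"]
    by (simp add: H_form_def extension_spec(2) xz)
qed (rule restricted_domain_subspace)

definition weight_form :: "(nat \<Rightarrow> real) \<Rightarrow> form" where
  "weight_form w x z = (\<Sum>n\<in>{1..N}. of_real (w n) * x n * cnj (z n))"

lemma hermitian_form_weight: "hermitian_form restricted_domain (weight_form w)"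
proof
  show "weight_form w (x + y) z = weight_form w x z + weight_form w y z" for x y z
    unfolding weight_form_def by (simp add: algebra_simps sum.distrib)
  show "weight_form w (scal c x) z = c * weight_form w x z" for x z c
    unfolding weight_form_def by (simp add: sum_distrib_left algebra_simps)
  show "weight_form w z x = cnj (weight_form w x z)" for x z
    unfolding weight_form_def by (simp add: cnj_sum algebra_simps)
qed (rule restricted_domain_subspace)

lemma restricted_domain_vanishes: "x \<in> restricted_domain \<Longrightarrow> n \<notin> {1..N} \<Longrightarrow> x n = 0"
  unfolding restricted_domain_def trunc_def by auto

lemma restricted_domain_finite_dim:
  "restricted_domain \<subseteq> seq.span ((\<lambda>k n. if n = k then 1 else 0) ` {1..N})"
proof
  fix x assume x: "x \<in> restricted_domain"
  have "x = (\<Sum>k\<in>{1..N}. scal (x k) (\<lambda>n. if n = k then 1 else 0))"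
  proof
    fix n
    have "(\<Sum>k\<in>{1..N}. scal (x k) (\<lambda>n. if n = k then 1 else 0)) n = (\<Sum>k\<in>{1..N}. if n = k then x k else 0)"
      unfolding sum_fun_apply by (rule sum.cong) auto
    then show "x n = (\<Sum>k\<in>{1..N}. scal (x k) (\<lambda>n. if n = k then 1 else 0)) n"
      using restricted_domain_vanishes[OF x, of n] by simp
  qed
  also have "\<dots> \<in> seq.span ((\<lambda>k n. if n = k then 1 else 0) ` {1..N})"
    by (intro seq.span_sum seq.span_scale seq.span_base) auto
  finally show "x \<in> seq.span ((\<lambda>k n. if n = k then 1 else 0) ` {1..N})" .
qed

lemma hermitian_pencil_weight:
  assumes w: "\<forall>n\<in>{1..N}. w n > 0"
  shows "hermitian_pencil restricted_domain H_form (weight_form w)"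
proof -
  interpret H: hermitian_form restricted_domain H_form
    by (rule hermitian_form_H)
  interpret G: hermitian_form restricted_domain "weight_form w"
    by (rule hermitian_form_weight)
  show ?thesis
  proof
    show "\<exists>F. finite F \<and> restricted_domain \<subseteq> seq.span F"
      using restricted_domain_finite_dim by blast
  next
    fix x assume x: "x \<in> restricted_domain" "x \<noteq> 0"
    then obtain n0 where n0: "x n0 \<noteq> 0"
      by (auto simp: fun_eq_iff)
    then have "n0 \<in> {1..N}"
      using restricted_domain_vanishes[OF x(1)] by blast
    have "Re (weight_form w x x) = (\<Sum>n\<in>{1..N}. w n * (cmod (x n))\<^sup>2)"
      unfolding weight_form_def by (simp add: Re_sum mult.assoc complex_mult_cnj cmod_power2)
    also have "\<dots> > 0"
    proof (rule sum_pos2)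
      show "0 < w n0 * (cmod (x n0))\<^sup>2"
        using w \<open>n0 \<in> {1..N}\<close> n0 by simp
      show "0 \<le> w n * (cmod (x n))\<^sup>2" if "n \<in> {1..N}" for n
        using w that by (simp add: less_imp_le)
    qed (use \<open>n0 \<in> {1..N}\<close> in simp_all)
    finally show "0 < Re (weight_form w x x)" .
  qed
qed

end

section \<open>Eigenfunctions and eigenvectors of the pencil\<close>

lemma sum_replicate_mset_count: "(\<Sum>x\<in>set xs. replicate_mset (count (mset xs) x) x) = mset xs"
  by (rule multiset_eqI) (simp add: count_sum count_eq_zero_iff)

context sl_problem
begin

abbreviation eigspace :: "(nat \<Rightarrow> real) \<Rightarrow> real \<Rightarrow> cseq set" where
  "eigspace w l \<equiv> sl_solutions N f q w A B (of_real l)"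

lemma eigspace_subspace: "seq.subspace (eigspace w l)"
proof (rule seq.subspaceI)
  show "0 \<in> eigspace w l"
    unfolding sl_solutions_eq using seq.subspace_0[OF bc_domain_subspace] by (simp add: sl_op_def fwd_diff_def)
  show "y + z \<in> eigspace w l" if "y \<in> eigspace w l" "z \<in> eigspace w l" for y z
    using that seq.subspace_add[OF bc_domain_subspace] sl_op_add
    unfolding sl_solutions_eq by (auto simp: algebra_simps)
  show "scal c y \<in> eigspace w l" if "y \<in> eigspace w l" for c y
    using that seq.subspace_scale[OF bc_domain_subspace] sl_op_scale
    unfolding sl_solutions_eq by (auto simp: algebra_simps)
qed

lemma trunc_eigfun:
  assumes y: "y \<in> eigspace w l"
  shows "trunc y \<in> restricted_domain" "pencil_eigvec H_form (weight_form w) restricted_domain (trunc y) l"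
proof -
  have yD: "y \<in> bc_domain" and eq: "\<forall>n\<in>{1..N}. sl_op y n = of_real l * of_real (w n) * y n"
    using y unfolding sl_solutions_eq by auto
  show "trunc y \<in> restricted_domain"
    unfolding restricted_domain_def using yD by auto
  show "pencil_eigvec H_form (weight_form w) restricted_domain (trunc y) l"
    unfolding pencil_eigvec_def
  proof
    fix z assume z: "z \<in> restricted_domain"
    have "H_form (trunc y) z = op_form y z"
      by (rule H_form_trunc[OF yD z])
    also have "\<dots> = (\<Sum>n\<in>{1..N}. of_real l * (of_real (w n) * trunc y n * cnj (z n)))"
      unfolding op_form_def by (rule sum.cong) (use eq in \<open>auto simp: trunc_def\<close>)
    finally show "H_form (trunc y) z = of_real l * weight_form w (trunc y) z"
      unfolding weight_form_def by (simp add: sum_distrib_left)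
  qed
qed

text \<open>At \<open>n = 1\<close> and \<open>n = N\<close> the equation expresses \<open>y 0\<close> and \<open>y (N + 1)\<close> through interior values,
  because \<open>f 0\<close> and \<open>f N\<close> do not vanish.\<close>
lemma eigfun_eq_0_if_trunc_eq_0:
  assumes y: "y \<in> eigspace w l" and "trunc y = 0"
  shows "y = 0"
proof -
  have yD: "y \<in> bc_domain" and eq: "\<forall>n\<in>{1..N}. sl_op y n = of_real l * of_real (w n) * y n"
    using y unfolding sl_solutions_eq by auto
  have interior: "y n = 0" if "n \<in> {1..N}" for n
    using assms(2) that unfolding trunc_eq_0_iff by blast
  have "- (of_real (f 0) * y 0) = sl_op y 1"
    unfolding sl_op_def fwd_diff_def using interior[of 1] interior[of 2] N_ge_2
    by (simp add: algebra_simps numeral_2_eq_2)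
  then have y0: "y 0 = 0"
    using eq interior[of 1] N_ge_2 f_0_nonzero by simp
  have "- (of_real (f N) * y (Suc N)) = sl_op y N"
    unfolding sl_op_def fwd_diff_def using interior[of N] interior[of "N - 1"] N_ge_2
    by (simp add: algebra_simps)
  then have yN: "y (Suc N) = 0"
    using eq interior[of N] N_ge_2 f_N_nonzero by simp
  show ?thesis
  proof
    fix n
    consider "n = 0" | "n \<in> {1..N}" | "n = Suc N" | "n > N + 1"
      by fastforce
    then show "y n = 0 n"
      using y0 yN interior yD unfolding bc_domain_def by cases auto
  qed
qed

lemma op_form_extension_eigvec:
  assumes x: "x \<in> restricted_domain" "pencil_eigvec H_form (weight_form w) restricted_domain x l"
    and z: "z \<in> bc_domain"
  shows "op_form (extension x) z = of_real l * (\<Sum>n\<in>{1..N}. of_real (w n) * extension x n * cnj (z n))"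
proof -
  have "trunc z \<in> restricted_domain"
    unfolding restricted_domain_def using z by auto
  then have "op_form (extension x) (trunc z) = of_real l * weight_form w x (trunc z)"
    using x(2) unfolding pencil_eigvec_def H_form_def by blast
  then have "op_form (extension x) z = of_real l * weight_form w x (trunc z)"
    by (simp only: op_form_trunc)
  also have "weight_form w x (trunc z) = weight_form w (trunc (extension x)) (trunc z)"
    using extension_spec(2)[OF x(1)] by simp
  also have "\<dots> = (\<Sum>n\<in>{1..N}. of_real (w n) * extension x n * cnj (z n))"
    unfolding weight_form_def trunc_def by (rule sum.cong) auto
  finally show ?thesis .
qed

text \<open>Testing against the unit sequences, which lie in the domain when supported away from the
  boundary, gives the equation at the interior points.\<close>
lemma extension_eigvec_interior:
  assumes x: "x \<in> restricted_domain" "pencil_eigvec H_form (weight_form w) restricted_domain x l"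
    and n: "2 \<le> n" "n < N"
  shows "sl_op (extension x) n = of_real l * of_real (w n) * extension x n"
proof -
  define e where "e = (\<lambda>m::nat. if m = n then (1::complex) else 0)"
  have "e \<in> bc_domain"
    unfolding bc_domain_def bc_vals_def bc_row_def fwd_diff_def e_def using n by auto
  moreover have "op_form (extension x) e = sl_op (extension x) n"
    unfolding op_form_def e_def using n by (simp add: if_distrib cong: if_cong)
  moreover have "(\<Sum>m\<in>{1..N}. of_real (w m) * extension x m * cnj (e m)) = of_real (w n) * extension x n"
    unfolding e_def using n by (simp add: if_distrib cong: if_cong)
  ultimately show ?thesis
    using op_form_extension_eigvec[OF x] by (simp add: mult.assoc)
qed

lemma end_correction:
  assumes interior: "\<And>n. 2 \<le> n \<Longrightarrow> n < N \<Longrightarrow> sl_op y n = of_real l * of_real (w n) * y n"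
  obtains y' where "\<And>m. m \<in> {1..N} \<Longrightarrow> y' m = y m" "\<And>m. m > N + 1 \<Longrightarrow> y' m = y m"
    "\<And>n. n \<in> {1..N} \<Longrightarrow> sl_op y' n = of_real l * of_real (w n) * y' n"
proof
  define a0 where "a0 = y 1 - (of_real l * of_real (w 1) * y 1 + of_real (f 1) * (y 2 - y 1)
    - of_real (q 1) * y 1) / of_real (f 0)"
  define aN where "aN = y N + (of_real (f (N-1)) * (y N - y (N-1)) + of_real (q N) * y N
    - of_real l * of_real (w N) * y N) / of_real (f N)"
  define y' where "y' = y(0 := a0, Suc N := aN)"
  show y'_eq: "y' m = y m" if "m \<in> {1..N}" for m
    using that unfolding y'_def by auto
  show "y' m = y m" if "m > N + 1" for m
    using that unfolding y'_def by auto
  show "sl_op y' n = of_real l * of_real (w n) * y' n" if n: "n \<in> {1..N}" for n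
  proof -
    consider "n = 1" | "n = N" | "2 \<le> n \<and> n < N"
      using n N_ge_2 by fastforce
    then show ?thesis
    proof cases
      case 1
      have "y' 2 = y 2" "y' 1 = y 1" "y' 0 = a0"
        using y'_eq N_ge_2 by (auto simp: y'_def)
      then show ?thesis
        unfolding 1 sl_op_def fwd_diff_def a0_def using f_0_nonzero by (simp add: field_simps numeral_2_eq_2)
    next
      case 2
      have "y' (N - 1) = y (N - 1)" "y' N = y N" "y' (Suc N) = aN"
        using y'_eq N_ge_2 by (auto simp: y'_def)
      then show ?thesis
        unfolding 2 sl_op_def fwd_diff_def aN_def using f_N_nonzero N_ge_2 by (simp add: field_simps)
    next
      case 3
      then have "y' (Suc n) = y (Suc n)" "y' n = y n" "y' (n - 1) = y (n - 1)"
        by (intro y'_eq; use 3 in arith)+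
      then have "sl_op y' n = sl_op y n"
        unfolding sl_op_def fwd_diff_def using 3 by simp
      then show ?thesis
        using interior 3 \<open>y' n = y n\<close> by simp
    qed
  qed
qed

text \<open>Maximality of the boundary condition: pairing with test sequences whose boundary data run
  through the kernel of the boundary map recovers both boundary equations.\<close>
lemma bc_vals_eq_0_if_boundary_terms:
  assumes "\<And>z. z \<in> bc_domain \<Longrightarrow> boundary_term y z 0 = boundary_term y z N"
  shows "bc_vals y 1 = 0" "bc_vals y 2 = 0"
proof -
  have "cnj d1 * bc_vals y 1 + cnj d2 * bc_vals y 2 = 0" for d1 d2
  proof -
    define p1 p2 r1 r2 where "p1 = adjA d1 d2 2" "p2 = - adjA d1 d2 1" "r1 = - adjB d1 d2 2" "r2 = adjB d1 d2 1"
    define z where "z m = (if m = 0 then p1 else if m = 1 then p1 + p2 / of_real (f 0)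
      else if m = N then r1 else if m = Suc N then r1 + r2 / of_real (f N) else 0)" for m
    have z_ends: "z 0 = p1" "of_real (f 0) * fwd_diff z 0 = p2" "z N = r1" "of_real (f N) * fwd_diff z N = r2"
      using N_ge_2 f_0_nonzero f_N_nonzero unfolding z_def fwd_diff_def by (auto simp: field_simps)
    have "bc_row A B (z 0) (of_real (f 0) * fwd_diff z 0) (z N) (of_real (f N) * fwd_diff z N) k = 0" for k
      unfolding z_ends p1_p2_r1_r2_def by (rule bc_row_kernel_vec)
    then have "z \<in> bc_domain"
      unfolding bc_domain_def bc_vals_def by (simp add: z_def)
    have "boundary_term y z 0 - boundary_term y z N = - (cnj d1 * bc_vals y 1 + cnj d2 * bc_vals y 2)"
      unfolding boundary_term_symp z_ends p1_p2_r1_r2_def bc_vals_def by (rule symp_kernel_vec)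
    then have "- (cnj d1 * bc_vals y 1 + cnj d2 * bc_vals y 2) = 0"
      using assms[OF \<open>z \<in> bc_domain\<close>] by (metis diff_self)
    then show ?thesis
      by (metis neg_equal_0_iff_equal)
  qed
  from this[of 1 0] this[of 0 1] show "bc_vals y 1 = 0" "bc_vals y 2 = 0"
    by simp_all
qed

lemma pencil_eigvec_lifts:
  assumes x: "x \<in> restricted_domain" "pencil_eigvec H_form (weight_form w) restricted_domain x l"
  shows "\<exists>y\<in>eigspace w l. trunc y = x"
proof -
  define y where "y = extension x"
  have yD: "y \<in> bc_domain" and y_trunc: "trunc y = x"
    using extension_spec[OF x(1)] by (auto simp: y_def)
  obtain y' where y'_eq: "\<And>m. m \<in> {1..N} \<Longrightarrow> y' m = y m" and y'_far: "\<And>m. m > N + 1 \<Longrightarrow> y' m = y m"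
    and y'_sol: "\<And>n. n \<in> {1..N} \<Longrightarrow> sl_op y' n = of_real l * of_real (w n) * y' n"
    using end_correction[of y l w] extension_eigvec_interior[OF x] unfolding y_def by blast
  have "boundary_term y' z 0 = boundary_term y' z N" if z: "z \<in> bc_domain" for z
  proof -
    have "(\<Sum>n\<in>{1..N}. sl_op y' n * cnj (z n)) = (\<Sum>n\<in>{1..N}. of_real l * (of_real (w n) * y n * cnj (z n)))"
      by (rule sum.cong) (simp_all add: y'_sol y'_eq mult.assoc)
    also have "\<dots> = op_form y z"
      using op_form_extension_eigvec[OF x z] unfolding y_def by (simp add: sum_distrib_left)
    finally have "(\<Sum>n\<in>{1..N}. sl_op y' n * cnj (z n)) = op_form y z" .
    moreover have "(\<Sum>n\<in>{1..N}. y' n * cnj (sl_op z n)) = (\<Sum>n\<in>{1..N}. y n * cnj (sl_op z n))"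
      by (rule sum.cong) (simp_all add: y'_eq)
    moreover have "\<dots> = op_form y z"
      using op_form_hermitian[OF yD z] unfolding op_form_def by (simp add: cnj_sum mult.commute)
    ultimately show ?thesis
      using green_identity[where M = N and y = y' and z = z] by (simp add: sum_subtractf)
  qed
  then have "y' \<in> bc_domain"
    using bc_vals_eq_0_if_boundary_terms yD y'_far unfolding bc_domain_def by auto
  then have "y' \<in> eigspace w l"
    unfolding sl_solutions_eq using y'_sol by auto
  moreover have "trunc y' = trunc y"
    using y'_eq unfolding trunc_def by (auto simp: fun_eq_iff)
  ultimately show ?thesis
    using y_trunc by blast
qed

text \<open>Eigenfunctions are the lifts of pencil eigenvectors, and lifting is injective by
  \<open>eigfun_eq_0_if_trunc_eq_0\<close>; so lifting the eigenvectors of eigenvalue \<open>l\<close> in an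
  orthonormal eigenbasis gives a basis of the eigenspace.\<close>
lemma eigspace_basis:
  assumes w: "\<forall>n\<in>{1..N}. w n > 0"
    and es: "orthonormal (weight_form w) es" "set es \<subseteq> restricted_domain" "restricted_domain \<subseteq> seq.span (set es)"
      "\<forall>e\<in>set es. pencil_eigvec H_form (weight_form w) restricted_domain e (lam e)"
  obtains Bs where "finite Bs" "Bs \<subseteq> eigspace w l" "seq.independent Bs" "eigspace w l \<subseteq> seq.span Bs"
    "card Bs = length (filter (\<lambda>e. lam e = l) es)"
proof -
  interpret P: hermitian_pencil restricted_domain H_form "weight_form w"
    by (rule hermitian_pencil_weight[OF w])
  define L where "L = filter (\<lambda>e. lam e = l) es"
  have L: "orthonormal (weight_form w) L" "set L \<subseteq> restricted_domain"
    using orthonormal_filter[OF es(1)] es(2) unfolding L_def by auto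
  have indep_L: "seq.independent (set L)"
    by (rule lin_indep_list_independent[OF P.orthonormal_lin_indep[OF L]])
  define lift where "lift e = (SOME y. y \<in> eigspace w l \<and> trunc y = e)" for e
  have lift: "lift e \<in> eigspace w l \<and> trunc (lift e) = e" if "e \<in> set L" for e
  proof -
    have "e \<in> restricted_domain" "pencil_eigvec H_form (weight_form w) restricted_domain e l"
      using that es(2,4) unfolding L_def by auto
    then have "\<exists>y. y \<in> eigspace w l \<and> trunc y = e"
      using pencil_eigvec_lifts by blast
    then show ?thesis
      unfolding lift_def by (rule someI_ex)
  qed
  have inj_lift: "inj_on lift (set L)"
    by (rule inj_on_inverseI[of _ trunc]) (use lift in auto)
  show ?thesis
  proof
    show "finite (lift ` set L)"
      by simp
    show "lift ` set L \<subseteq> eigspace w l"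
      using lift by auto
    have "distinct L"
      using L(1) unfolding orthonormal_def by simp
    then show "card (lift ` set L) = length (filter (\<lambda>e. lam e = l) es)"
      unfolding L_def[symmetric] using card_image[OF inj_lift] distinct_card by simp
    show "seq.independent (lift ` set L)"
    proof (rule seq.independent_if_scalars_zero)
      fix u b assume sum0: "(\<Sum>b\<in>lift ` set L. scal (u b) b) = 0" and b: "b \<in> lift ` set L"
      have "(\<Sum>e\<in>set L. scal (u (lift e)) (trunc (lift e))) = 0"
        using arg_cong[OF sum0, of trunc] trunc_sum[of "\<lambda>e. u (lift e)" lift "set L"] trunc_zero
        by (simp add: sum.reindex[OF inj_lift])
      then have "(\<Sum>e\<in>set L. scal (u (lift e)) e) = 0"
        using lift by (simp cong: sum.cong)
      then have "\<forall>e\<in>set L. u (lift e) = 0"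
        using seq.independentD[OF indep_L, of "set L" "\<lambda>e. u (lift e)"] by auto
      then show "u b = 0"
        using b by auto
    qed simp
    show "eigspace w l \<subseteq> seq.span (lift ` set L)"
    proof
      fix y assume y: "y \<in> eigspace w l"
      have "trunc y \<in> seq.span (set L)"
        unfolding L_def using trunc_eigfun[OF y] P.pencil_eigvec_in_eigspan[OF es] by blast
      then obtain u where u: "trunc y = (\<Sum>e\<in>set L. scal (u e) e)"
        using seq.span_finite[of "set L"] by auto
      define y' where "y' = (\<Sum>e\<in>set L. scal (u e) (lift e))"
      have y': "y' \<in> eigspace w l"
        unfolding y'_def using lift
        by (intro seq.subspace_sum[OF eigspace_subspace] seq.subspace_scale[OF eigspace_subspace]) auto
      have "trunc y' = trunc y"
        unfolding y'_def trunc_sum u using lift by (simp cong: sum.cong)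
      then have "trunc (y - y') = 0"
        by (simp add: trunc_diff)
      then have "y - y' = 0"
        using eigfun_eq_0_if_trunc_eq_0 seq.subspace_diff[OF eigspace_subspace y y'] by blast
      then have "y = y'"
        by simp
      also have "y' \<in> seq.span (lift ` set L)"
        unfolding y'_def by (intro seq.span_sum seq.span_scale seq.span_base) auto
      finally show "y \<in> seq.span (lift ` set L)" .
    qed
  qed
qed

lemma eig_mult_eq:
  assumes w: "\<forall>n\<in>{1..N}. w n > 0"
    and es: "orthonormal (weight_form w) es" "set es \<subseteq> restricted_domain" "restricted_domain \<subseteq> seq.span (set es)"
      "\<forall>e\<in>set es. pencil_eigvec H_form (weight_form w) restricted_domain e (lam e)"
  shows "eig_mult N f q w A B (of_real l) = count (mset (map lam es)) l"
proof -
  obtain Bs where Bs: "finite Bs" "Bs \<subseteq> eigspace w l" "seq.independent Bs" "eigspace w l \<subseteq> seq.span Bs"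
    "card Bs = length (filter (\<lambda>e. lam e = l) es)"
    by (rule eigspace_basis[OF w es])
  have "seq.span Bs = seq.span (eigspace w l)"
    by (rule antisym[OF seq.span_mono[OF Bs(2)] seq.span_minimal[OF Bs(4) seq.subspace_span]])
  then have "seq.dim (eigspace w l) = card Bs"
    by (rule seq.dim_eq_card[OF _ Bs(3)])
  also have "\<dots> = count (mset (map lam es)) l"
    unfolding Bs(5) by (induction es) auto
  finally show ?thesis
    unfolding eig_mult_def .
qed

lemma is_eigenvalue_iff:
  assumes w: "\<forall>n\<in>{1..N}. w n > 0"
    and es: "orthonormal (weight_form w) es" "set es \<subseteq> restricted_domain" "restricted_domain \<subseteq> seq.span (set es)"
      "\<forall>e\<in>set es. pencil_eigvec H_form (weight_form w) restricted_domain e (lam e)"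
  shows "is_eigenvalue N f q w A B (of_real l) \<longleftrightarrow> l \<in> lam ` set es"
proof -
  obtain Bs where Bs: "finite Bs" "Bs \<subseteq> eigspace w l" "seq.independent Bs" "eigspace w l \<subseteq> seq.span Bs"
    "card Bs = length (filter (\<lambda>e. lam e = l) es)"
    by (rule eigspace_basis[OF w es])
  have "l \<in> lam ` set es \<longleftrightarrow> filter (\<lambda>e. lam e = l) es \<noteq> []"
    by (auto simp: filter_empty_conv)
  also have "\<dots> \<longleftrightarrow> Bs \<noteq> {}"
    using Bs(1,5) by (metis card_0_eq length_0_conv)
  also have "\<dots> \<longleftrightarrow> (\<exists>y\<in>eigspace w l. y \<noteq> 0)"
  proof
    assume "Bs \<noteq> {}"
    then obtain b where "b \<in> Bs"
      by blast
    moreover have "b \<noteq> 0"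
      using seq.dependent_zero[of Bs] Bs(3) \<open>b \<in> Bs\<close> by blast
    ultimately show "\<exists>y\<in>eigspace w l. y \<noteq> 0"
      using Bs(2) by blast
  next
    assume "\<exists>y\<in>eigspace w l. y \<noteq> 0"
    then show "Bs \<noteq> {}"
      using Bs(4) seq.span_empty by auto
  qed
  finally show ?thesis
    unfolding is_eigenvalue_def by (simp add: zero_fun_def)
qed

lemma eig_list_eq:
  assumes w: "\<forall>n\<in>{1..N}. w n > 0"
    and es: "orthonormal (weight_form w) es" "set es \<subseteq> restricted_domain" "restricted_domain \<subseteq> seq.span (set es)"
      "\<forall>e\<in>set es. pencil_eigvec H_form (weight_form w) restricted_domain e (lam e)"
  shows "eig_list N f q w A B = sort (map lam es)"
proof -
  have "{l. is_eigenvalue N f q w A B (of_real l)} = set (map lam es)"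
    using is_eigenvalue_iff[OF w es] by auto
  then show ?thesis
    unfolding eig_list_def eig_mult_eq[OF w es] by (simp only: sum_replicate_mset_count sorted_list_of_multiset_mset)
qed

end

lemma sorted_nth_eq_0_iff:
  fixes xs :: "real list"
  assumes "sorted xs" "j < length xs"
  shows "xs ! j = 0 \<longleftrightarrow>
    length (filter (\<lambda>x. x < 0) xs) \<le> j \<and> j < length (filter (\<lambda>x. x < 0) xs) + count (mset xs) 0"
proof -
  define neg where "neg = filter (\<lambda>x. x < 0) xs"
  define zero where "zero = filter (\<lambda>x. x = 0) xs"
  define pos where "pos = filter (\<lambda>x. x > 0) xs"
  have "mset (sort neg @ zero @ sort pos) = mset xs"
    unfolding neg_def zero_def pos_def by (induction xs) auto
  moreover have "sorted zero"
    unfolding zero_def by (induction xs) auto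
  then have "sorted (sort neg @ zero @ sort pos)"
    unfolding sorted_append neg_def zero_def pos_def by auto
  ultimately have xs: "xs = sort neg @ zero @ sort pos"
    using properties_for_sort sorted_sort_id[OF assms(1)] by metis
  have count_zero: "count (mset xs) 0 = length zero"
    unfolding zero_def by (induction xs) auto
  have "j < length neg + length zero + length pos"
    using assms(2) arg_cong[OF xs, of length] by simp
  then consider "j < length neg" | "length neg \<le> j" "j < length neg + length zero"
    | "length neg + length zero \<le> j" "j < length neg + length zero + length pos"
    by linarith
  then show ?thesis
  proof cases
    case 1
    then have "xs ! j = sort neg ! j"
      by (subst xs) (simp add: nth_append)
    moreover have "sort neg ! j \<in> set (sort neg)"
      using 1 by (intro nth_mem) simp
    ultimately have "xs ! j \<in> set neg"
      by simp
    then show ?thesis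
      using 1 unfolding neg_def by auto
  next
    case 2
    then have "j - length neg < length zero"
      by simp
    with 2 have "xs ! j = zero ! (j - length neg)"
      by (subst xs) (simp add: nth_append)
    then have "xs ! j \<in> set zero"
      using nth_mem[OF \<open>j - length neg < length zero\<close>] by simp
    then show ?thesis
      using 2 count_zero unfolding neg_def zero_def by auto
  next
    case 3
    then have "xs ! j = sort pos ! (j - length neg - length zero)"
      by (subst xs) (auto simp: nth_append)
    moreover have "sort pos ! (j - length neg - length zero) \<in> set (sort pos)"
      using 3 by (intro nth_mem) simp
    ultimately have "xs ! j \<in> set pos"
      by simp
    then show ?thesis
      using 3 count_zero unfolding neg_def pos_def by auto
  qed
qed

context sl_problem
begin

lemma eig_list_weight_invariants:
  assumes w: "\<forall>n\<in>{1..N}. w n > 0" and w': "\<forall>n\<in>{1..N}. w' n > 0"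
  shows "length (eig_list N f q w A B) = length (eig_list N f q w' A B)"
    and "length (filter (\<lambda>x. x < 0) (eig_list N f q w A B)) = length (filter (\<lambda>x. x < 0) (eig_list N f q w' A B))"
    and "count (mset (eig_list N f q w A B)) 0 = count (mset (eig_list N f q w' A B)) 0"
proof -
  note P = hermitian_pencil_weight[OF w] and P' = hermitian_pencil_weight[OF w']
  obtain es lam where es: "orthonormal (weight_form w) es" "set es \<subseteq> restricted_domain"
      "restricted_domain \<subseteq> seq.span (set es)" "\<forall>e\<in>set es. pencil_eigvec H_form (weight_form w) restricted_domain e (lam e)"
    using hermitian_pencil.spectral_theorem[OF P] by blast
  obtain es' lam' where es': "orthonormal (weight_form w') es'" "set es' \<subseteq> restricted_domain"
      "restricted_domain \<subseteq> seq.span (set es')" "\<forall>e\<in>set es'. pencil_eigvec H_form (weight_form w') restricted_domain e (lam' e)"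
    using hermitian_pencil.spectral_theorem[OF P'] by blast
  have length_filter_sort: "length (filter P (sort xs)) = length (filter P xs)" for P and xs :: "real list"
    by (metis mset_filter mset_sort size_mset)
  show "length (eig_list N f q w A B) = length (eig_list N f q w' A B)"
    "length (filter (\<lambda>x. x < 0) (eig_list N f q w A B)) = length (filter (\<lambda>x. x < 0) (eig_list N f q w' A B))"
    using sylvester_inertia[OF P P' es es'] unfolding eig_list_eq[OF w es] eig_list_eq[OF w' es']
    by (simp_all add: length_filter_sort filter_map comp_def)
  have "sl_solutions N f q w A B 0 = sl_solutions N f q w' A B 0"
    unfolding sl_solutions_eq by simp
  then have "eig_mult N f q w A B 0 = eig_mult N f q w' A B 0"
    unfolding eig_mult_def by simp
  then show "count (mset (eig_list N f q w A B)) 0 = count (mset (eig_list N f q w' A B)) 0"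
    using eig_mult_eq[OF w es, of 0] eig_mult_eq[OF w' es', of 0]
    unfolding eig_list_eq[OF w es] eig_list_eq[OF w' es'] by simp
qed

end

theorem lemma4p1:
  fixes N :: nat and f q w0 :: "nat \<Rightarrow> real" and A B :: "complex^2^2"
    and i j :: nat and a :: real
  assumes "N \<ge> 2"
    and "\<forall>n\<in>{0..N}. f n \<noteq> 0"
    and "rank_AB_2 A B"
    and "self_adjoint_bc A B"
    and "i \<in> {1..N}"
    and "\<forall>m\<in>{1..N}. m \<noteq> i \<longrightarrow> w0 m > 0"
    and "a > 0"
    and "j < length (eig_list N f q (w0(i := a)) A B)"
    and "eig_list N f q (w0(i := a)) A B ! j = 0"
  shows "\<forall>b>a. j < length (eig_list N f q (w0(i := b)) A B)
                \<and> eig_list N f q (w0(i := b)) A B ! j = 0"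
proof (intro allI impI)
  fix b assume "b > a"
  interpret sl_problem A B N f q
    by unfold_locales (use assms in auto)
  have "\<forall>n\<in>{1..N}. (w0(i := a)) n > 0" "\<forall>n\<in>{1..N}. (w0(i := b)) n > 0"
    using assms(6,7) \<open>b > a\<close> by auto
  note invariants = eig_list_weight_invariants[OF this]
  let ?La = "eig_list N f q (w0(i := a)) A B" and ?Lb = "eig_list N f q (w0(i := b)) A B"
  have sorted: "sorted ?La" "sorted ?Lb"
    by (simp_all add: eig_list_def)
  have "length (filter (\<lambda>x. x < 0) ?La) \<le> j \<and> j < length (filter (\<lambda>x. x < 0) ?La) + count (mset ?La) 0"
    using sorted_nth_eq_0_iff[OF sorted(1) assms(8)] assms(9) by blast
  moreover have jb: "j < length ?Lb"
    using assms(8) invariants(1) by linarith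
  ultimately have "?Lb ! j = 0"
    unfolding sorted_nth_eq_0_iff[OF sorted(2) jb] invariants(2,3)[symmetric] by blast
  with jb show "j < length ?Lb \<and> ?Lb ! j = 0" ..
qed

end
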